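(* Let $c:I\to\mathbb{L}^3$ be a regular timelike curve such that $c''(t)$ is spacelike for all $t\in I$. Then there exists a Born-Infeld soliton general surface containing $c$ as a geodesic, where by a geodesic is meant a curve on the surface whose principal normal agrees with the surface normal in $\mathbb{L}^3$.
   Context: $\mathbb{L}^3$ denotes $\mathbb{R}^3$ with the metric $ds^2=dx^2+dy^2-dz^2$. A function $\psi$ on an open set of the $(u,v)$-plane is a Born-Infeld soliton (in the variables $u,v$) if $(1-\psi_v^2)\psi_{uu}+2\psi_u\psi_v\psi_{uv}-(1+\psi_u^2)\psi_{vv}=0$. A surface is a Born-Infeld soliton general surface if it is locally of the form $(\psi(y,z),y,z)$, $(x,\psi(x,z),z)$ or $(x,y,\psi(x,y))$ where $\psi$ solves the Born-Infeld equation (in the respective pair of variables). *)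

theory Defs
  imports "HOL-Analysis.Analysis"
begin

type_synonym R3 = "real \<times> real \<times> real"

definition lor :: "R3 \<Rightarrow> R3 \<Rightarrow> real" where
  "lor p q = fst p * fst q + fst (snd p) * fst (snd q) - snd (snd p) * snd (snd q)"

definition pu :: "(real \<times> real \<Rightarrow> real) \<Rightarrow> real \<times> real \<Rightarrow> real" where
  "pu f p = deriv (\<lambda>s. f (s, snd p)) (fst p)"

definition pv :: "(real \<times> real \<Rightarrow> real) \<Rightarrow> real \<times> real \<Rightarrow> real" where
  "pv f p = deriv (\<lambda>s. f (fst p, s)) (snd p)"

definition has_partials_on :: "(real \<times> real) set \<Rightarrow> (real \<times> real \<Rightarrow> real) \<Rightarrow> bool" where
  "has_partials_on U f \<longleftrightarrow>
     (\<forall>p\<in>U. (\<lambda>s. f (s, snd p)) differentiable (at (fst p)) \<and>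
             (\<lambda>s. f (fst p, s)) differentiable (at (snd p)))"

definition C2_on :: "(real \<times> real) set \<Rightarrow> (real \<times> real \<Rightarrow> real) \<Rightarrow> bool" where
  "C2_on U f \<longleftrightarrow> continuous_on U f \<and>
     has_partials_on U f \<and> has_partials_on U (pu f) \<and> has_partials_on U (pv f) \<and>
     continuous_on U (pu f) \<and> continuous_on U (pv f) \<and>
     continuous_on U (pu (pu f)) \<and> continuous_on U (pv (pu f)) \<and>
     continuous_on U (pu (pv f)) \<and> continuous_on U (pv (pv f))"

definition born_infeld :: "(real \<times> real) set \<Rightarrow> (real \<times> real \<Rightarrow> real) \<Rightarrow> bool" where
  "born_infeld U \<psi> \<longleftrightarrow> open U \<and> C2_on U \<psi> \<and>
     (\<forall>p\<in>U. (1 - (pv \<psi> p)\<^sup>2) * pu (pu \<psi>) p + 2 * pu \<psi> p * pv \<psi> p * pv (pu \<psi>) p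
              - (1 + (pu \<psi> p)\<^sup>2) * pv (pv \<psi>) p = 0)"

definition graph_pt :: "nat \<Rightarrow> (real \<times> real \<Rightarrow> real) \<Rightarrow> real \<times> real \<Rightarrow> R3" where
  "graph_pt k \<psi> p =
     (if k = 1 then (\<psi> p, fst p, snd p)
      else if k = 2 then (fst p, \<psi> p, snd p)
      else (fst p, snd p, \<psi> p))"

text \<open>A Lorentzian normal vector of the graph (Lorentz-orthogonal to its tangent plane).\<close>
definition graph_normal :: "nat \<Rightarrow> (real \<times> real \<Rightarrow> real) \<Rightarrow> real \<times> real \<Rightarrow> R3" where
  "graph_normal k \<psi> p =
     (if k = 1 then (1, - pu \<psi> p, pv \<psi> p)
      else if k = 2 then (- pu \<psi> p, 1, pv \<psi> p)
      else (pu \<psi> p, pv \<psi> p, 1))"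

definition BI_chart :: "R3 set \<Rightarrow> R3 set \<Rightarrow> nat \<Rightarrow> (real \<times> real) set \<Rightarrow> (real \<times> real \<Rightarrow> real) \<Rightarrow> bool" where
  "BI_chart S V k U \<psi> \<longleftrightarrow> open V \<and> k \<in> {1,2,3} \<and> born_infeld U \<psi> \<and>
     S \<inter> V = graph_pt k \<psi> ` U"

definition BI_general_surface :: "R3 set \<Rightarrow> bool" where
  "BI_general_surface S \<longleftrightarrow>
     (\<forall>p\<in>S. \<exists>V k U \<psi>. p \<in> V \<and> BI_chart S V k U \<psi>)"

definition smooth_curve :: "real set \<Rightarrow> (real \<Rightarrow> R3) \<Rightarrow> bool" where
  "smooth_curve I c \<longleftrightarrow> (\<exists>D. D 0 = c \<and>
     (\<forall>n. \<forall>t\<in>I. (D n has_vector_derivative D (Suc n) t) (at t)))"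

definition vel :: "(real \<Rightarrow> R3) \<Rightarrow> real \<Rightarrow> R3" where
  "vel c t = vector_derivative c (at t)"

definition acc :: "(real \<Rightarrow> R3) \<Rightarrow> real \<Rightarrow> R3" where
  "acc c t = vector_derivative (vel c) (at t)"

text \<open>(Non-normalized) principal normal: component of c'' Lorentz-orthogonal to c'.\<close>
definition prin_normal :: "(real \<Rightarrow> R3) \<Rightarrow> real \<Rightarrow> R3" where
  "prin_normal c t = acc c t - (lor (acc c t) (vel c t) / lor (vel c t) (vel c t)) *\<^sub>R vel c t"

definition geodesic_on :: "R3 set \<Rightarrow> real set \<Rightarrow> (real \<Rightarrow> R3) \<Rightarrow> bool" where
  "geodesic_on S I c \<longleftrightarrow> (\<forall>t\<in>I. c t \<in> S \<and>
     (\<forall>V k U \<psi> q. BI_chart S V k U \<psi> \<longrightarrow> c t \<in> V \<longrightarrow> q \<in> U \<longrightarrow> graph_pt k \<psi> q = c t \<longrightarrow>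
        (\<exists>a::real. prin_normal c t = a *\<^sub>R graph_normal k \<psi> q)))"

end

theory Submission
  imports Defs
begin

(* Along c put T = c', let P be its principal normal and w the vector Lorentz-orthogonal to T and P
   with <w, w> = - <T, T>. Then a = (T + w)/2 and b = (T - w)/2 are null, and curves alpha, beta
   with alpha' = a, beta' = b and alpha + beta = c give a surface X(u, v) = alpha(u) + beta(v) whose
   diagonal is c. Its tangent plane along c is span {a, b}, which is Lorentz-orthogonal to P, so
   the surface normal is parallel to P and c is a geodesic.

   Near each point, dropping the x- or the y-coordinate makes X a local diffeomorphism onto a plane
   domain, so the surface is a graph there, and the null conditions on a and b turn into the
   Born-Infeld equation for the graph function. The z-coordinate of X increases in both parameters
   (for a suitable time orientation), so a thin horizontal slab around X(t, t) only meets points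
   whose parameters are close to t; inside such a slab the whole surface is a single graph. *)

section \<open>Lorentzian linear algebra\<close>

lemma lor_commute: "lor p q = lor q p"
  by (simp add: lor_def algebra_simps)

lemma lor_add_left: "lor (p + q) r = lor p r + lor q r"
  and lor_add_right: "lor r (p + q) = lor r p + lor r q"
  and lor_diff_left: "lor (p - q) r = lor p r - lor q r"
  and lor_diff_right: "lor r (p - q) = lor r p - lor r q"
  and lor_scaleR_left: "lor (s *\<^sub>R p) r = s * lor p r"
  and lor_scaleR_right: "lor r (s *\<^sub>R p) = s * lor r p"
  by (simp_all add: lor_def algebra_simps)

lemmas lor_linear = lor_add_left lor_add_right lor_diff_left lor_diff_right
  lor_scaleR_left lor_scaleR_right

text \<open>\<open>lor (lor_cross p q) r\<close> is the determinant of \<open>p\<close>, \<open>q\<close>, \<open>r\<close>.\<close>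
definition lor_cross :: "R3 \<Rightarrow> R3 \<Rightarrow> R3" where
  "lor_cross p q = (fst (snd p) * snd (snd q) - snd (snd p) * fst (snd q),
                    snd (snd p) * fst q - fst p * snd (snd q),
                    fst (snd p) * fst q - fst p * fst (snd q))"

lemma lor_cross_orthogonal_left: "lor (lor_cross p q) p = 0"
  and lor_cross_orthogonal_right: "lor (lor_cross p q) q = 0"
  by (simp_all add: lor_cross_def lor_def algebra_simps)

lemma lor_cross_self: "lor (lor_cross p q) (lor_cross p q) = (lor p q)\<^sup>2 - lor p p * lor q q"
  by (simp add: lor_cross_def lor_def power2_eq_square algebra_simps)

text \<open>The expansion of \<open>x\<close> in the frame \<open>p\<close>, \<open>q\<close>, \<open>lor_cross p q\<close>, cleared of denominators.\<close>
lemma lor_cross_expansion: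
  "lor (lor_cross p q) (lor_cross p q) *\<^sub>R x = lor x (lor_cross p q) *\<^sub>R lor_cross p q
     + (lor p q * lor x q - lor q q * lor x p) *\<^sub>R p + (lor p q * lor x p - lor p p * lor x q) *\<^sub>R q"
  by (cases p; cases q; cases x) (simp add: lor_cross_def lor_def algebra_simps)

lemma orthogonal_null_pair_parallel:
  assumes "lor a a = 0" "lor b b = 0" "lor a b \<noteq> 0"
    and x: "lor x a = 0" "lor x b = 0" and y: "lor y a = 0" "lor y b = 0" "y \<noteq> 0"
  shows "\<exists>l. x = l *\<^sub>R y"
proof -
  define N where "N = lor_cross a b"
  have NN: "lor N N \<noteq> 0"
    using assms(1-3) by (simp add: N_def lor_cross_self)
  have x_N: "lor N N *\<^sub>R x = lor x N *\<^sub>R N" and y_N: "lor N N *\<^sub>R y = lor y N *\<^sub>R N"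
    using lor_cross_expansion[of a b x] lor_cross_expansion[of a b y] x y
    by (simp_all add: N_def lor_commute)
  have yN: "lor y N \<noteq> 0"
    using y_N NN y(3) by auto
  have "lor N N *\<^sub>R ((lor x N / lor y N) *\<^sub>R y) = (lor x N / lor y N) *\<^sub>R (lor N N *\<^sub>R y)"
    by simp
  also have "\<dots> = lor N N *\<^sub>R x"
    using y_N yN by (simp add: x_N)
  finally show ?thesis
    using NN by (metis scaleR_cancel_left)
qed

lemma null_vector_time_nonzero:
  assumes "lor p p = 0" "p \<noteq> 0"
  shows "snd (snd p) \<noteq> 0"
proof
  assume z: "snd (snd p) = 0"
  then have "(fst p)\<^sup>2 + (fst (snd p))\<^sup>2 = 0"
    using assms(1) by (simp add: lor_def power2_eq_square)
  then show False
    using assms(2) z by (cases p) (simp add: sum_power2_eq_zero_iff zero_prod_def)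
qed

lemma null_vectors_same_time_orientation:
  assumes "lor p p = 0" "lor q q = 0" "lor p q < 0"
  shows "0 < snd (snd p) * snd (snd q)"
proof -
  obtain x y z x' y' z' where pq: "p = (x, y, z)" "q = (x', y', z')"
    by (cases p; cases q) auto
  have cone: "x * x + y * y = z * z" "x' * x' + y' * y' = z' * z'" and neg: "x * x' + y * y' < z * z'"
    using assms by (simp_all add: pq lor_def)
  have "(x * x' + y * y')\<^sup>2 \<le> (x * x + y * y) * (x' * x' + y' * y')"
    using zero_le_power2[of "x * y' - y * x'"] by (simp add: power2_eq_square algebra_simps)
  then have "(x * x' + y * y')\<^sup>2 \<le> (z * z')\<^sup>2"
    using cone by (simp add: power2_eq_square algebra_simps)
  then have "\<bar>x * x' + y * y'\<bar> \<le> \<bar>z * z'\<bar>"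
    using abs_le_square_iff by blast
  then show ?thesis
    using neg by (simp add: pq)
qed

text \<open>Read \<open>g = (g1, g2)\<close> as the gradient of a graph function, \<open>p\<close> and \<open>r\<close> as the
  projected tangents of two null coordinate curves whose lifts \<open>(g \<bullet> p, p1, p2)\<close> and
  \<open>(g \<bullet> r, r1, r2)\<close> are null, and \<open>A\<close>, \<open>B\<close> as the partial derivatives of \<open>g1\<close>, \<open>g2\<close>
  in the null coordinates. The conclusion is the Born-Infeld equation for the Hessian they define.\<close>
lemma born_infeld_identity:
  fixes g1 g2 p1 p2 r1 r2 A1 A2 B1 B2 :: real
  assumes d: "p1 * r2 - p2 * r1 \<noteq> 0" and p2: "p2 \<noteq> 0" and r2: "r2 \<noteq> 0"
    and null_p: "(g1 * p1 + g2 * p2)\<^sup>2 + p1\<^sup>2 - p2\<^sup>2 = 0"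
    and null_r: "(g1 * r1 + g2 * r2)\<^sup>2 + r1\<^sup>2 - r2\<^sup>2 = 0"
    and rel_p: "A2 * p1 + B2 * p2 = 0" and rel_r: "A1 * r1 + B1 * r2 = 0"
  shows "(1 - g2\<^sup>2) * ((A1 * r2 - A2 * p2) / (p1 * r2 - p2 * r1))
          + 2 * g1 * g2 * ((A2 * p1 - A1 * r1) / (p1 * r2 - p2 * r1))
          - (1 + g1\<^sup>2) * ((B2 * p1 - B1 * r1) / (p1 * r2 - p2 * r1)) = 0"
proof -
  define E where "E = (1 - g2\<^sup>2) * (A1 * r2 - A2 * p2) + 2 * g1 * g2 * (A2 * p1 - A1 * r1)
    - (1 + g1\<^sup>2) * (B2 * p1 - B1 * r1)"
  have "p2 * r2 * E = r2 * (A2 * ((g1 * p1 + g2 * p2)\<^sup>2 + p1\<^sup>2 - p2\<^sup>2) - (1 + g1\<^sup>2) * p1 * (A2 * p1 + B2 * p2))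
      - p2 * (A1 * ((g1 * r1 + g2 * r2)\<^sup>2 + r1\<^sup>2 - r2\<^sup>2) - (1 + g1\<^sup>2) * r1 * (A1 * r1 + B1 * r2))"
    unfolding E_def by (simp add: power2_eq_square algebra_simps)
  then have "E = 0"
    using null_p null_r rel_p rel_r p2 r2 by simp
  moreover have "(1 - g2\<^sup>2) * ((A1 * r2 - A2 * p2) / (p1 * r2 - p2 * r1))
      + 2 * g1 * g2 * ((A2 * p1 - A1 * r1) / (p1 * r2 - p2 * r1))
      - (1 + g1\<^sup>2) * ((B2 * p1 - B1 * r1) / (p1 * r2 - p2 * r1)) = E / (p1 * r2 - p2 * r1)"
    unfolding E_def by (simp only: times_divide_eq_right add_divide_distrib[symmetric] diff_divide_distrib[symmetric])
  ultimately show ?thesis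
    by simp
qed

section \<open>Real functions of one variable\<close>

lemma has_vector_derivative_imp_continuous_on:
  assumes "\<And>t. t \<in> S \<Longrightarrow> (f has_vector_derivative f' t) (at t)"
  shows "continuous_on S f"
  using assms has_vector_derivative_continuous by (blast intro: continuous_at_imp_continuous_on)

lemma C1_differentiable_on_bounded_linear:
  assumes "bounded_linear L" "f C1_differentiable_on S"
  shows "(\<lambda>x. L (f x)) C1_differentiable_on S"
proof -
  obtain D where D: "\<forall>x\<in>S. (f has_vector_derivative D x) (at x)" "continuous_on S D"
    using assms(2) unfolding C1_differentiable_on_def by blast
  show ?thesis
    unfolding C1_differentiable_on_def
  proof (intro exI[of _ "\<lambda>x. L (D x)"] conjI ballI)
    show "continuous_on S (\<lambda>x. L (D x))"
      by (rule continuous_on_compose2[OF linear_continuous_on[OF assms(1)] D(2) subset_UNIV])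
    show "((\<lambda>x. L (f x)) has_vector_derivative L (D x)) (at x)" if "x \<in> S" for x
      using D(1) that by (simp add: bounded_linear.has_vector_derivative[OF assms(1)])
  qed
qed

lemma has_real_derivative_bounded_linear:
  "bounded_linear L \<Longrightarrow> (f has_vector_derivative f') F \<Longrightarrow> ((\<lambda>t. L (f t)) has_real_derivative L f') F"
  using bounded_linear.has_vector_derivative by (fastforce simp: has_real_derivative_iff_has_vector_derivative)

lemma C1_differentiable_on_fst [derivative_intros]:
  "f C1_differentiable_on S \<Longrightarrow> (\<lambda>x. fst (f x)) C1_differentiable_on S"
  by (rule C1_differentiable_on_bounded_linear[OF bounded_linear_fst])

lemma C1_differentiable_on_snd [derivative_intros]:
  "f C1_differentiable_on S \<Longrightarrow> (\<lambda>x. snd (f x)) C1_differentiable_on S"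
  by (rule C1_differentiable_on_bounded_linear[OF bounded_linear_snd])

lemma C1_differentiable_on_Pair [derivative_intros]:
  assumes "f C1_differentiable_on S" "g C1_differentiable_on S"
  shows "(\<lambda>x. (f x, g x)) C1_differentiable_on S"
proof -
  obtain Df Dg where D: "\<forall>x\<in>S. (f has_vector_derivative Df x) (at x)" "continuous_on S Df"
    "\<forall>x\<in>S. (g has_vector_derivative Dg x) (at x)" "continuous_on S Dg"
    using assms unfolding C1_differentiable_on_def by blast
  have "((\<lambda>x. (f x, g x)) has_vector_derivative (Df x, Dg x)) (at x)" if "x \<in> S" for x
    using D(1,3) that by (simp add: has_vector_derivative_Pair)
  moreover have "continuous_on S (\<lambda>x. (Df x, Dg x))"
    using D(2,4) by (rule continuous_on_Pair)
  ultimately show ?thesis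
    unfolding C1_differentiable_on_def by (intro exI[of _ "\<lambda>x. (Df x, Dg x)"]) simp
qed

lemma C1_differentiable_on_real_compose:
  fixes f :: "real \<Rightarrow> real"
  assumes f: "f C1_differentiable_on S"
    and g: "\<And>x. x \<in> S \<Longrightarrow> (g has_real_derivative g' (f x)) (at (f x))" "continuous_on (f ` S) g'"
  shows "(\<lambda>x. g (f x)) C1_differentiable_on S"
proof -
  obtain D where D: "\<forall>x\<in>S. (f has_vector_derivative D x) (at x)" "continuous_on S D"
    using f unfolding C1_differentiable_on_def by blast
  have "((\<lambda>x. g (f x)) has_vector_derivative g' (f x) * D x) (at x)" if "x \<in> S" for x
    using DERIV_chain2[OF g(1) D(1)[rule_format, unfolded has_real_derivative_iff_has_vector_derivative[symmetric]]]
      that by (simp add: has_real_derivative_iff_has_vector_derivative)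
  moreover have "continuous_on S (\<lambda>x. g' (f x) * D x)"
    using continuous_on_compose2[OF g(2) has_vector_derivative_imp_continuous_on] D by (auto intro!: continuous_intros)
  ultimately show ?thesis
    unfolding C1_differentiable_on_def by (intro exI[of _ "\<lambda>x. g' (f x) * D x"]) simp
qed

lemma C1_differentiable_on_inverse:
  fixes f :: "real \<Rightarrow> real"
  assumes "f C1_differentiable_on S" "\<And>x. x \<in> S \<Longrightarrow> f x \<noteq> 0"
  shows "(\<lambda>x. inverse (f x)) C1_differentiable_on S"
proof (rule C1_differentiable_on_real_compose[where g' = "\<lambda>y. - (inverse y)\<^sup>2", OF assms(1)])
  show "(inverse has_real_derivative - (inverse (f x))\<^sup>2) (at (f x))" if "x \<in> S" for x
    using DERIV_inverse[OF assms(2)[OF that]] by (simp add: power2_eq_square)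
  show "continuous_on (f ` S) (\<lambda>y. - (inverse y)\<^sup>2)"
    using assms(2) by (intro continuous_intros) auto
qed

lemma C1_differentiable_on_sqrt:
  fixes f :: "real \<Rightarrow> real"
  assumes "f C1_differentiable_on S" "\<And>x. x \<in> S \<Longrightarrow> 0 < f x"
  shows "(\<lambda>x. sqrt (f x)) C1_differentiable_on S"
proof (rule C1_differentiable_on_real_compose[where g' = "\<lambda>y. inverse (sqrt y) / 2", OF assms(1)])
  show "(sqrt has_real_derivative inverse (sqrt (f x)) / 2) (at (f x))" if "x \<in> S" for x
    using DERIV_real_sqrt[OF assms(2)[OF that]] .
  show "continuous_on (f ` S) (\<lambda>y. inverse (sqrt y) / 2)"
    using assms(2) by (intro continuous_intros) (auto simp: less_imp_neq[symmetric])
qed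

lemma C1_differentiable_on_lor:
  "f C1_differentiable_on S \<Longrightarrow> g C1_differentiable_on S \<Longrightarrow> (\<lambda>x. lor (f x) (g x)) C1_differentiable_on S"
  unfolding lor_def by (intro derivative_intros)

lemma C1_differentiable_on_lor_cross:
  "f C1_differentiable_on S \<Longrightarrow> g C1_differentiable_on S \<Longrightarrow> (\<lambda>x. lor_cross (f x) (g x)) C1_differentiable_on S"
  unfolding lor_cross_def by (intro derivative_intros)

lemma C1_differentiable_on_divide:
  fixes f g :: "real \<Rightarrow> real"
  assumes "f C1_differentiable_on S" "g C1_differentiable_on S" "\<And>x. x \<in> S \<Longrightarrow> g x \<noteq> 0"
  shows "(\<lambda>x. f x / g x) C1_differentiable_on S"
  unfolding divide_inverse using assms by (intro C1_differentiable_on_mult C1_differentiable_on_inverse)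

lemma C1_differentiable_on_open_cong:
  assumes "open S" "\<And>x. x \<in> S \<Longrightarrow> f x = g x" "f C1_differentiable_on S"
  shows "g C1_differentiable_on S"
proof -
  obtain D where D: "\<forall>x\<in>S. (f has_vector_derivative D x) (at x)" "continuous_on S D"
    using assms(3) unfolding C1_differentiable_on_def by blast
  have "(g has_vector_derivative D x) (at x)" if "x \<in> S" for x
    using has_vector_derivative_transform_within_open[OF D(1)[rule_format, OF that] assms(1) that] assms(2)
    by blast
  then show ?thesis
    unfolding C1_differentiable_on_def using D(2) by (intro exI[of _ D]) simp
qed

lemma continuous_on_interval_sign:
  fixes f :: "real \<Rightarrow> real"
  assumes "is_interval S" "continuous_on S f" "\<And>t. t \<in> S \<Longrightarrow> f t \<noteq> 0"
  shows "(\<forall>t\<in>S. 0 < f t) \<or> (\<forall>t\<in>S. f t < 0)"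
proof (rule ccontr)
  assume "\<not> ?thesis"
  then obtain s t where st: "s \<in> S" "t \<in> S" "f s \<le> 0" "0 \<le> f t"
    by (auto simp: not_less)
  have "is_interval (f ` S)"
    using connected_continuous_image[OF assms(2) is_interval_connected[OF assms(1)]]
    by (simp add: is_interval_connected_1)
  then have "0 \<in> f ` S"
    using mem_is_interval_1_I[of "f ` S" "f s" "f t" 0] st by auto
  then show False
    using assms(3) by auto
qed

lemma strict_mono_on_deriv_pos:
  fixes f :: "real \<Rightarrow> real"
  assumes "is_interval S" "\<And>t. t \<in> S \<Longrightarrow> (f has_real_derivative f' t) (at t)" "\<And>t. t \<in> S \<Longrightarrow> 0 < f' t"
  shows "strict_mono_on S f"
proof (rule strict_mono_onI)
  fix r s assume rs: "r \<in> S" "s \<in> S" "r < s"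
  show "f r < f s"
  proof (rule DERIV_pos_imp_increasing[OF \<open>r < s\<close>])
    fix x assume "r \<le> x" "x \<le> s"
    then have "x \<in> S"
      using mem_is_interval_1_I[OF assms(1) rs(1,2)] by blast
    then show "\<exists>y. DERIV f x :> y \<and> 0 < y"
      using assms(2,3) by blast
  qed
qed

lemma inj_on_monotone_sums:
  fixes f1 g1 f2 g2 :: "real \<Rightarrow> real"
  assumes f1: "strict_mono_on J f1" and g1: "strict_mono_on J g1"
    and f2: "strict_mono_on J f2" and g2: "strict_mono_on J (\<lambda>v. - g2 v)"
  shows "inj_on (\<lambda>w. (f1 (fst w) + g1 (snd w), f2 (fst w) + g2 (snd w))) (J \<times> J)"
proof (rule inj_onI)
  have no_less: False
    if "x < x'" "x \<in> J" "x' \<in> J" "y \<in> J" "y' \<in> J"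
      "f1 x + g1 y = f1 x' + g1 y'" "f2 x + g2 y = f2 x' + g2 y'" for x x' y y'
  proof -
    have "f1 x < f1 x'"
      using strict_mono_on_less[OF f1 that(2,3)] that(1) by simp
    then have "y' < y"
      using strict_mono_on_less[OF g1 that(5,4)] that(6) by simp
    then have "g2 y < g2 y'"
      using strict_mono_on_less[OF g2 that(5,4)] by simp
    moreover have "f2 x < f2 x'"
      using strict_mono_on_less[OF f2 that(2,3)] that(1) by simp
    ultimately show False
      using that(7) by simp
  qed
  fix w w' assume "w \<in> J \<times> J" "w' \<in> J \<times> J"
    and "(f1 (fst w) + g1 (snd w), f2 (fst w) + g2 (snd w)) = (f1 (fst w') + g1 (snd w'), f2 (fst w') + g2 (snd w'))"
  then obtain u v u' v' where w: "w = (u, v)" "w' = (u', v')" and J: "u \<in> J" "v \<in> J" "u' \<in> J" "v' \<in> J"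
    and e: "f1 u + g1 v = f1 u' + g1 v'" "f2 u + g2 v = f2 u' + g2 v'"
    by (cases w; cases w') auto
  have "u = u'"
    using no_less[of u u' v v'] no_less[of u' u v' v] J e by (metis linorder_neqE_linordered_idom)
  moreover from this have "v = v'"
    using e(1) strict_mono_on_eqD[OF g1] J by simp
  ultimately show "w = w'"
    by (simp add: w)
qed

lemma open_interval_eq_einterval:
  assumes "open S" "is_interval S"
  shows "S = einterval (Inf (ereal ` S)) (Sup (ereal ` S))"
proof
  show "S \<subseteq> einterval (Inf (ereal ` S)) (Sup (ereal ` S))"
  proof
    fix x assume x: "x \<in> S"
    obtain e where e: "0 < e" "ball x e \<subseteq> S"
      using assms(1) x open_contains_ball by blast
    then have "x - e/2 \<in> S" "x + e/2 \<in> S"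
      by (auto simp: dist_real_def)
    then have "Inf (ereal ` S) \<le> ereal (x - e/2)" "ereal (x + e/2) \<le> Sup (ereal ` S)"
      by (auto intro: INF_lower SUP_upper)
    moreover have "ereal (x - e/2) < ereal x" "ereal x < ereal (x + e/2)"
      using e(1) by simp_all
    ultimately have "Inf (ereal ` S) < ereal x" "ereal x < Sup (ereal ` S)"
      by (meson order.strict_trans1 order.strict_trans2)+
    then show "x \<in> einterval (Inf (ereal ` S)) (Sup (ereal ` S))"
      by (simp add: einterval_def)
  qed
  show "einterval (Inf (ereal ` S)) (Sup (ereal ` S)) \<subseteq> S"
  proof
    fix x assume "x \<in> einterval (Inf (ereal ` S)) (Sup (ereal ` S))"
    then obtain y z where "y \<in> S" "z \<in> S" "y < x" "x < z"
      by (auto simp: einterval_def Inf_less_iff less_Sup_iff)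
    then show "x \<in> S"
      using mem_is_interval_1_I[OF assms(2)] by (meson less_imp_le)
  qed
qed

lemma antiderivative_on_open_interval:
  fixes f :: "real \<Rightarrow> 'a::euclidean_space"
  assumes "open S" "is_interval S" "continuous_on S f"
  obtains F where "\<And>t. t \<in> S \<Longrightarrow> (F has_vector_derivative f t) (at t)"
proof (cases "S = {}")
  case False
  define l r where "l = Inf (ereal ` S)" and "r = Sup (ereal ` S)"
  have S: "S = einterval l r"
    unfolding l_def r_def by (rule open_interval_eq_einterval[OF assms(1,2)])
  obtain x where "x \<in> S"
    using False by blast
  then have "l < r"
    using S by (auto simp: einterval_def)
  moreover have "isCont f x" if "l < x" "x < r" for x
    using that S assms(1,3) continuous_on_eq_continuous_at by (fastforce simp: einterval_def)
  ultimately obtain F where "\<forall>x. l < x \<longrightarrow> x < r \<longrightarrow> (F has_vector_derivative f x) (at x)"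
    using einterval_antiderivative by blast
  then show ?thesis
    using S that by (auto simp: einterval_def)
next
  case True
  then show ?thesis
    using that by blast
qed

text \<open>Half the supremum of the admissible radii, so that \<open>P\<close> holds on the ball of that radius
  itself; the cap 1 keeps the supremum finite.\<close>
definition ball_radius :: "('a::metric_space set \<Rightarrow> bool) \<Rightarrow> 'a \<Rightarrow> real" where
  "ball_radius P x = Sup {r. 0 < r \<and> r \<le> 1 \<and> P (ball x r)} / 2"

context
  fixes P :: "'a::metric_space set \<Rightarrow> bool" and S :: "'a set"
  assumes P_subset: "\<And>A B. P A \<Longrightarrow> B \<subseteq> A \<Longrightarrow> P B"
    and P_local: "\<And>x. x \<in> S \<Longrightarrow> \<exists>r>0. P (ball x r)"
begin

private abbreviation radii :: "'a \<Rightarrow> real set" where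
  "radii x \<equiv> {r. 0 < r \<and> r \<le> 1 \<and> P (ball x r)}"

private lemma radii_nonempty: "x \<in> S \<Longrightarrow> radii x \<noteq> {}"
proof -
  assume "x \<in> S"
  then obtain r where "0 < r" "P (ball x r)"
    using P_local by blast
  moreover have "ball x (min r 1) \<subseteq> ball x r"
    by (rule subset_ball) simp
  ultimately have "min r 1 \<in> radii x"
    using P_subset[of "ball x r" "ball x (min r 1)"] \<open>0 < r\<close> by simp
  then show ?thesis
    by blast
qed

private lemma radii_bdd: "bdd_above (radii x)"
  unfolding bdd_above_def by auto

private lemma radii_less_Sup:
  assumes "x \<in> S" "s < Sup (radii x)"
  shows "P (ball x s)"
proof -
  obtain r where "r \<in> radii x" "s < r"
    using assms less_cSup_iff[OF radii_nonempty radii_bdd] by blast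
  then show ?thesis
    using P_subset[of "ball x r" "ball x s"] subset_ball[of s r x] by auto
qed

lemma ball_radius_pos: "x \<in> S \<Longrightarrow> 0 < ball_radius P x"
proof -
  assume "x \<in> S"
  then obtain r where "r \<in> radii x"
    using radii_nonempty by blast
  then have "0 < r" "r \<le> Sup (radii x)"
    using radii_bdd by (auto intro: cSup_upper)
  then show ?thesis
    by (simp add: ball_radius_def)
qed

lemma ball_radius_ball: "x \<in> S \<Longrightarrow> P (ball x (ball_radius P x))"
  using radii_less_Sup[of x "ball_radius P x"] ball_radius_pos[of x] by (simp add: ball_radius_def)

lemma ball_radius_lipschitz:
  assumes "x \<in> S" "y \<in> S"
  shows "ball_radius P x \<le> ball_radius P y + dist x y"
proof (rule ccontr)
  define Rx Ry where "Rx = Sup (radii x)" and "Ry = Sup (radii y)"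
  assume "\<not> ?thesis"
  then have lt: "Ry + 2 * dist x y < Rx"
    by (simp add: ball_radius_def Rx_def Ry_def)
  define s where "s = (Ry + 2 * dist x y + Rx) / 2"
  have "0 < Ry"
    using ball_radius_pos[OF assms(2)] by (simp add: ball_radius_def Ry_def)
  have "Rx \<le> 1"
    unfolding Rx_def using radii_nonempty[OF assms(1)] by (rule cSup_least) simp
  have "P (ball x s)"
    using radii_less_Sup[OF assms(1)] lt by (simp add: s_def Rx_def)
  moreover have "ball y (s - dist x y) \<subseteq> ball x s"
  proof
    fix z assume "z \<in> ball y (s - dist x y)"
    then show "z \<in> ball x s"
      using dist_triangle[of x z y] by simp
  qed
  moreover have "0 < s - dist x y"
    using lt \<open>0 < Ry\<close> zero_le_dist[of x y] unfolding s_def by argo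
  moreover have "s - dist x y \<le> 1"
    using lt \<open>Rx \<le> 1\<close> zero_le_dist[of x y] unfolding s_def by argo
  ultimately have "s - dist x y \<in> radii y"
    using P_subset[of "ball x s" "ball y (s - dist x y)"] by simp
  then have "s - dist x y \<le> Ry"
    unfolding Ry_def using radii_bdd by (rule cSup_upper)
  then show False
    using lt zero_le_dist[of x y] unfolding s_def by argo
qed

end

section \<open>Functions of two variables\<close>

definition has_gradient_on ::
    "(real \<times> real) set \<Rightarrow> (real \<times> real \<Rightarrow> real) \<Rightarrow> (real \<times> real \<Rightarrow> real) \<Rightarrow> (real \<times> real \<Rightarrow> real) \<Rightarrow> bool"
  where "has_gradient_on W f fu fv \<longleftrightarrow> continuous_on W fu \<and> continuous_on W fv \<and>
    (\<forall>w\<in>W. (f has_derivative (\<lambda>h. fst h * fu w + snd h * fv w)) (at w))"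

definition C1_on :: "(real \<times> real) set \<Rightarrow> (real \<times> real \<Rightarrow> real) \<Rightarrow> bool" where
  "C1_on W f \<longleftrightarrow> (\<exists>fu fv. has_gradient_on W f fu fv)"

lemma has_derivative_imp_continuous_on:
  "(\<And>x. x \<in> S \<Longrightarrow> (f has_derivative f' x) (at x)) \<Longrightarrow> continuous_on S f"
  by (rule has_derivative_continuous_on) (rule has_derivative_at_withinI)

lemma has_gradient_on_continuous: "has_gradient_on W f fu fv \<Longrightarrow> continuous_on W f"
  unfolding has_gradient_on_def by (intro has_derivative_imp_continuous_on) blast

lemma C1_on_continuous: "C1_on W f \<Longrightarrow> continuous_on W f"
  unfolding C1_on_def using has_gradient_on_continuous by blast

lemma has_derivative_partials:
  assumes "(f has_derivative (\<lambda>h. fst h * fu + snd h * fv)) (at y)"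
  shows "((\<lambda>s. f (s, snd y)) has_real_derivative fu) (at (fst y))"
    and "((\<lambda>s. f (fst y, s)) has_real_derivative fv) (at (snd y))"
proof -
  have y: "(f has_derivative (\<lambda>h. fst h * fu + snd h * fv)) (at (fst y, snd y))"
    using assms by simp
  have "((\<lambda>s. (s, snd y)) has_derivative (\<lambda>h. (h, 0))) (at (fst y))"
    and "((\<lambda>s. (fst y, s)) has_derivative (\<lambda>h. (0, h))) (at (snd y))"
    by (auto intro!: derivative_eq_intros)
  from this[THEN has_derivative_compose, OF y]
  show "((\<lambda>s. f (s, snd y)) has_real_derivative fu) (at (fst y))"
    and "((\<lambda>s. f (fst y, s)) has_real_derivative fv) (at (snd y))"
    by (simp_all add: has_field_derivative_def mult_commute_abs)
qed

lemma has_gradient_on_partials: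
  assumes "has_gradient_on W f fu fv" "y \<in> W"
  shows "pu f y = fu y" "pv f y = fv y"
    and "(\<lambda>s. f (s, snd y)) differentiable (at (fst y))" "(\<lambda>s. f (fst y, s)) differentiable (at (snd y))"
proof -
  note d = has_derivative_partials[of f "fu y" "fv y" y]
  have "(f has_derivative (\<lambda>h. fst h * fu y + snd h * fv y)) (at y)"
    using assms unfolding has_gradient_on_def by blast
  then show "pu f y = fu y" "pv f y = fv y"
    "(\<lambda>s. f (s, snd y)) differentiable (at (fst y))" "(\<lambda>s. f (fst y, s)) differentiable (at (snd y))"
    using d DERIV_imp_deriv real_differentiable_def unfolding pu_def pv_def by blast+
qed

lemma has_gradient_on_has_partials_on: "has_gradient_on W f fu fv \<Longrightarrow> has_partials_on W f"
  unfolding has_partials_on_def using has_gradient_on_partials(3,4) by blast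

lemma has_gradient_on_transform:
  assumes "open W" "has_gradient_on W f fu fv" "\<And>y. y \<in> W \<Longrightarrow> g y = f y"
    and "\<And>y. y \<in> W \<Longrightarrow> gu y = fu y" "\<And>y. y \<in> W \<Longrightarrow> gv y = fv y"
  shows "has_gradient_on W g gu gv"
  unfolding has_gradient_on_def
proof (intro conjI ballI)
  show "continuous_on W gu" "continuous_on W gv"
    using assms(2,4,5) unfolding has_gradient_on_def by (auto cong: continuous_on_cong)
  fix w assume w: "w \<in> W"
  have "(f has_derivative (\<lambda>h. fst h * fu w + snd h * fv w)) (at w)"
    using assms(2) w unfolding has_gradient_on_def by blast
  then have "(g has_derivative (\<lambda>h. fst h * fu w + snd h * fv w)) (at w)"
    by (rule has_derivative_transform_within_open[OF _ assms(1) w]) (simp add: assms(3))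
  then show "(g has_derivative (\<lambda>h. fst h * gu w + snd h * gv w)) (at w)"
    using assms(4,5)[OF w] by simp
qed

lemma C2_on_gradients:
  assumes U: "open U" and \<psi>: "has_gradient_on U \<psi> f1 f2"
    and f1: "has_gradient_on U f1 h11 h12" and f2: "has_gradient_on U f2 h21 h22"
  shows "C2_on U \<psi>"
    and "\<And>y. y \<in> U \<Longrightarrow> pu \<psi> y = f1 y \<and> pv \<psi> y = f2 y \<and> pu (pu \<psi>) y = h11 y \<and> pv (pu \<psi>) y = h12 y
       \<and> pu (pv \<psi>) y = h21 y \<and> pv (pv \<psi>) y = h22 y"
proof -
  have e: "pu \<psi> y = f1 y" "pv \<psi> y = f2 y" if "y \<in> U" for y
    using has_gradient_on_partials[OF \<psi> that] by auto
  have g1: "has_gradient_on U (pu \<psi>) h11 h12" and g2: "has_gradient_on U (pv \<psi>) h21 h22"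
    by (rule has_gradient_on_transform[OF U f1], simp_all add: e,
        rule has_gradient_on_transform[OF U f2], simp_all add: e)
  note p1 = has_gradient_on_partials[OF g1] and p2 = has_gradient_on_partials[OF g2]
  have "continuous_on U (pu (pu \<psi>))" "continuous_on U (pv (pu \<psi>))"
    "continuous_on U (pu (pv \<psi>))" "continuous_on U (pv (pv \<psi>))"
    using g1 g2 p1(1,2) p2(1,2) unfolding has_gradient_on_def by (auto cong: continuous_on_cong)
  then show "C2_on U \<psi>"
    unfolding C2_on_def
    using has_gradient_on_continuous[OF \<psi>] has_gradient_on_continuous[OF g1] has_gradient_on_continuous[OF g2]
      has_gradient_on_has_partials_on[OF \<psi>] has_gradient_on_has_partials_on[OF g1]
      has_gradient_on_has_partials_on[OF g2]
    by blast
  show "\<And>y. y \<in> U \<Longrightarrow> pu \<psi> y = f1 y \<and> pv \<psi> y = f2 y \<and> pu (pu \<psi>) y = h11 y \<and> pv (pu \<psi>) y = h12 y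
       \<and> pu (pv \<psi>) y = h21 y \<and> pv (pv \<psi>) y = h22 y"
    using e p1(1,2) p2(1,2) by blast
qed

lemma has_derivative_fst_real:
  assumes "(\<phi> has_real_derivative d) (at (fst w))"
  shows "((\<lambda>x. \<phi> (fst x)) has_derivative (\<lambda>h. fst h * d)) (at w)"
  using has_derivative_compose[OF has_derivative_fst[OF has_derivative_ident]
      assms[unfolded has_field_derivative_def]]
  by (simp add: mult.commute)

lemma has_derivative_snd_real:
  assumes "(\<phi> has_real_derivative d) (at (snd w))"
  shows "((\<lambda>x. \<phi> (snd x)) has_derivative (\<lambda>h. snd h * d)) (at w)"
  using has_derivative_compose[OF has_derivative_snd[OF has_derivative_ident]
      assms[unfolded has_field_derivative_def]]
  by (simp add: mult.commute)

lemma has_derivative_fst_C1: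
  fixes \<phi> :: "real \<Rightarrow> real"
  assumes "\<phi> C1_differentiable_on J" "fst w \<in> J"
  shows "\<exists>d. ((\<lambda>x. \<phi> (fst x)) has_derivative (\<lambda>h. fst h * d)) (at w)"
  using assms has_derivative_fst_real
  unfolding C1_differentiable_on_def has_real_derivative_iff_has_vector_derivative[symmetric] by blast

lemma has_derivative_snd_C1:
  fixes \<phi> :: "real \<Rightarrow> real"
  assumes "\<phi> C1_differentiable_on J" "snd w \<in> J"
  shows "\<exists>d. ((\<lambda>x. \<phi> (snd x)) has_derivative (\<lambda>h. snd h * d)) (at w)"
  using assms has_derivative_snd_real
  unfolding C1_differentiable_on_def has_real_derivative_iff_has_vector_derivative[symmetric] by blast

lemma C1_on_fst:
  fixes \<phi> :: "real \<Rightarrow> real"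
  assumes "\<phi> C1_differentiable_on J" "fst ` W \<subseteq> J"
  shows "C1_on W (\<lambda>w. \<phi> (fst w))"
proof -
  obtain D where D: "\<forall>u\<in>J. (\<phi> has_real_derivative D u) (at u)" "continuous_on J D"
    using assms(1) unfolding C1_differentiable_on_def has_real_derivative_iff_has_vector_derivative by blast
  have "has_gradient_on W (\<lambda>w. \<phi> (fst w)) (\<lambda>w. D (fst w)) (\<lambda>w. 0)"
    unfolding has_gradient_on_def
    using D assms(2) by (auto intro!: has_derivative_fst_real continuous_on_compose2[OF D(2)] continuous_intros)
  then show ?thesis
    unfolding C1_on_def by blast
qed

lemma C1_on_snd:
  fixes \<phi> :: "real \<Rightarrow> real"
  assumes "\<phi> C1_differentiable_on J" "snd ` W \<subseteq> J"
  shows "C1_on W (\<lambda>w. \<phi> (snd w))"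
proof -
  obtain D where D: "\<forall>u\<in>J. (\<phi> has_real_derivative D u) (at u)" "continuous_on J D"
    using assms(1) unfolding C1_differentiable_on_def has_real_derivative_iff_has_vector_derivative by blast
  have "has_gradient_on W (\<lambda>w. \<phi> (snd w)) (\<lambda>w. 0) (\<lambda>w. D (snd w))"
    unfolding has_gradient_on_def
    using D assms(2) by (auto intro!: has_derivative_snd_real continuous_on_compose2[OF D(2)] continuous_intros)
  then show ?thesis
    unfolding C1_on_def by blast
qed

lemma C1_on_diff:
  assumes "C1_on W f" "C1_on W g"
  shows "C1_on W (\<lambda>w. f w - g w)"
proof -
  obtain fu fv gu gv where "has_gradient_on W f fu fv" "has_gradient_on W g gu gv"
    using assms unfolding C1_on_def by blast
  then have "has_gradient_on W (\<lambda>w. f w - g w) (\<lambda>w. fu w - gu w) (\<lambda>w. fv w - gv w)"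
    unfolding has_gradient_on_def
    by (auto intro!: continuous_intros has_derivative_eq_rhs[OF has_derivative_diff] simp: algebra_simps)
  then show ?thesis
    unfolding C1_on_def by blast
qed

lemma C1_on_mult:
  assumes "C1_on W f" "C1_on W g"
  shows "C1_on W (\<lambda>w. f w * g w)"
proof -
  obtain fu fv gu gv where f: "has_gradient_on W f fu fv" and g: "has_gradient_on W g gu gv"
    using assms unfolding C1_on_def by blast
  have "has_gradient_on W (\<lambda>w. f w * g w) (\<lambda>w. f w * gu w + fu w * g w) (\<lambda>w. f w * gv w + fv w * g w)"
    using f g has_gradient_on_continuous[OF f] has_gradient_on_continuous[OF g]
    unfolding has_gradient_on_def
    by (auto intro!: continuous_intros has_derivative_eq_rhs[OF has_derivative_mult] simp: algebra_simps)
  then show ?thesis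
    unfolding C1_on_def by blast
qed

lemma C1_on_divide:
  assumes "C1_on W f" "C1_on W g" "\<And>w. w \<in> W \<Longrightarrow> g w \<noteq> 0"
  shows "C1_on W (\<lambda>w. f w / g w)"
proof -
  obtain fu fv gu gv where f: "has_gradient_on W f fu fv" and g: "has_gradient_on W g gu gv"
    using assms unfolding C1_on_def by blast
  have "has_gradient_on W (\<lambda>w. f w / g w)
      (\<lambda>w. (fu w * g w - f w * gu w) / (g w * g w)) (\<lambda>w. (fv w * g w - f w * gv w) / (g w * g w))"
    using f g has_gradient_on_continuous[OF f] has_gradient_on_continuous[OF g] assms(3)
    unfolding has_gradient_on_def
    by (auto intro!: continuous_intros has_derivative_eq_rhs[OF has_derivative_divide]
        simp: field_simps power2_eq_square)
  then show ?thesis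
    unfolding C1_on_def by blast
qed

lemma has_gradient_on_compose:
  assumes \<phi>: "has_gradient_on W \<phi> fu fv" and GU: "\<And>y. y \<in> U \<Longrightarrow> G y \<in> W"
    and G: "\<And>y. y \<in> U \<Longrightarrow>
      (G has_derivative (\<lambda>h. (fst h * g11 y + snd h * g12 y, fst h * g21 y + snd h * g22 y))) (at y)"
    and g: "continuous_on U g11" "continuous_on U g12" "continuous_on U g21" "continuous_on U g22"
  shows "has_gradient_on U (\<lambda>y. \<phi> (G y))
    (\<lambda>y. g11 y * fu (G y) + g21 y * fv (G y)) (\<lambda>y. g12 y * fu (G y) + g22 y * fv (G y))"
  unfolding has_gradient_on_def
proof (intro conjI ballI)
  have "continuous_on U G"
    using G by (rule has_derivative_imp_continuous_on)
  then have "continuous_on U (\<lambda>y. fu (G y))" "continuous_on U (\<lambda>y. fv (G y))"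
    using \<phi> GU unfolding has_gradient_on_def by (auto intro: continuous_on_compose2)
  then show "continuous_on U (\<lambda>y. g11 y * fu (G y) + g21 y * fv (G y))"
    "continuous_on U (\<lambda>y. g12 y * fu (G y) + g22 y * fv (G y))"
    using g by (auto intro!: continuous_intros)
  fix y assume y: "y \<in> U"
  have "(\<phi> has_derivative (\<lambda>h. fst h * fu (G y) + snd h * fv (G y))) (at (G y))"
    using \<phi> GU[OF y] unfolding has_gradient_on_def by blast
  from has_derivative_compose[OF G[OF y] this]
  show "((\<lambda>y. \<phi> (G y)) has_derivative
      (\<lambda>h. fst h * (g11 y * fu (G y) + g21 y * fv (G y)) + snd h * (g12 y * fu (G y) + g22 y * fv (G y)))) (at y)"
    by (rule has_derivative_eq_rhs) (simp add: fun_eq_iff algebra_simps)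
qed

lemma has_derivative_product_identity:
  fixes f g p q r :: "'a::real_normed_vector \<Rightarrow> real"
  assumes W: "open W" "w \<in> W" and identity: "\<And>x. x \<in> W \<Longrightarrow> f x * p x + g x * q x = r x"
    and "(f has_derivative f') (at w)" "(g has_derivative g') (at w)"
    and "(p has_derivative p') (at w)" "(q has_derivative q') (at w)" "(r has_derivative r') (at w)"
    and e: "p' e = 0" "q' e = 0" "r' e = 0"
  shows "f' e * p w + g' e * q w = 0"
proof -
  have "((\<lambda>x. f x * p x + g x * q x - r x) has_derivative
      (\<lambda>h. f w * p' h + f' h * p w + (g w * q' h + g' h * q w) - r' h)) (at w)"
    using assms(4-8) by (intro has_derivative_diff has_derivative_add has_derivative_mult)
  moreover have "((\<lambda>x. f x * p x + g x * q x - r x) has_derivative (\<lambda>h. 0)) (at w)"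
    by (rule has_derivative_transform_within_open[OF has_derivative_const W]) (simp add: identity)
  ultimately have "(\<lambda>h. f w * p' h + f' h * p w + (g w * q' h + g' h * q w) - r' h) = (\<lambda>h. 0)"
    by (rule has_derivative_unique)
  from fun_cong[OF this, of e] show ?thesis
    using e by simp
qed

section \<open>Surfaces with null coordinate curves\<close>

definition coord :: "nat \<Rightarrow> R3 \<Rightarrow> real" where
  "coord i q = (if i = 1 then fst q else if i = 2 then fst (snd q) else snd (snd q))"

text \<open>For \<open>k \<in> {1, 2}\<close>, the parameters of \<open>q\<close> as a point of a graph of type \<open>k\<close>
  (see \<open>graph_pt\<close>); the time coordinate comes second.\<close>
definition drop_coord :: "nat \<Rightarrow> R3 \<Rightarrow> real \<times> real" where
  "drop_coord k q = (if k = 1 then (fst (snd q), snd (snd q)) else (fst q, snd (snd q)))"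

lemma bounded_linear_coord: "bounded_linear (coord i)"
proof -
  have "coord i = (if i = 1 then fst else if i = 2 then (\<lambda>q. fst (snd q)) else (\<lambda>q. snd (snd q)))"
    by (auto simp: coord_def)
  then show ?thesis
    by (simp add: bounded_linear_fst bounded_linear_fst_comp[OF bounded_linear_snd]
        bounded_linear_snd_comp[OF bounded_linear_snd])
qed

lemma bounded_linear_drop_coord: "bounded_linear (drop_coord k)"
proof (cases "k = 1")
  case True
  then have "drop_coord k = snd"
    by (auto simp: drop_coord_def)
  then show ?thesis
    using bounded_linear_snd by metis
next
  case False
  then have "drop_coord k = (\<lambda>q. (fst q, snd (snd q)))"
    by (auto simp: drop_coord_def)
  then show ?thesis
    using bounded_linear_Pair[OF bounded_linear_fst bounded_linear_snd_comp[OF bounded_linear_snd]] by metis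
qed

lemma coord_add: "coord i (p + q) = coord i p + coord i q"
  and coord_scaleR: "coord i (s *\<^sub>R p) = s * coord i p"
  and drop_coord_add: "drop_coord k (p + q) = drop_coord k p + drop_coord k q"
  and drop_coord_scaleR: "drop_coord k (s *\<^sub>R p) = s *\<^sub>R drop_coord k p"
  and snd_drop_coord: "snd (drop_coord k p) = snd (snd p)"
  by (simp_all add: coord_def drop_coord_def prod_eq_iff)

lemma lor_drop_coord:
  "k \<in> {1, 2} \<Longrightarrow> lor q q = (coord k q)\<^sup>2 + (fst (drop_coord k q))\<^sup>2 - (snd (drop_coord k q))\<^sup>2"
  by (auto simp: drop_coord_def coord_def lor_def power2_eq_square)

lemma graph_pt_drop_coord:
  "k \<in> {1, 2} \<Longrightarrow> graph_pt k \<psi> (drop_coord k q) = q \<longleftrightarrow> \<psi> (drop_coord k q) = coord k q"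
  by (cases q) (auto simp: graph_pt_def drop_coord_def coord_def)

locale null_parametrization =
  fixes I :: "real set" and \<sigma> :: real and \<alpha> \<beta> a b :: "real \<Rightarrow> R3"
  assumes I: "open I" "is_interval I"
    and \<alpha>: "\<And>t. t \<in> I \<Longrightarrow> (\<alpha> has_vector_derivative a t) (at t)"
    and \<beta>: "\<And>t. t \<in> I \<Longrightarrow> (\<beta> has_vector_derivative b t) (at t)"
    and a_C1: "a C1_differentiable_on I" and b_C1: "b C1_differentiable_on I"
    and null: "\<And>t. t \<in> I \<Longrightarrow> lor (a t) (a t) = 0 \<and> lor (b t) (b t) = 0 \<and> lor (a t) (b t) < 0"
    and future: "\<And>t. t \<in> I \<Longrightarrow> 0 < \<sigma> * snd (snd (a t)) \<and> 0 < \<sigma> * snd (snd (b t))"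
begin

definition X :: "real \<times> real \<Rightarrow> R3" where
  "X w = \<alpha> (fst w) + \<beta> (snd w)"

definition time :: "R3 \<Rightarrow> real" where
  "time q = \<sigma> * snd (snd q)"

lemma bounded_linear_time: "bounded_linear time"
  unfolding time_def[abs_def]
  by (intro bounded_linear_const_mult bounded_linear_snd_comp bounded_linear_snd)

lemma time_X: "time (X w) = time (\<alpha> (fst w)) + time (\<beta> (snd w))"
  by (simp add: X_def time_def algebra_simps)

lemma strict_mono_time_\<alpha>: "strict_mono_on I (\<lambda>u. time (\<alpha> u))"
  by (rule strict_mono_on_deriv_pos[OF I(2) has_real_derivative_bounded_linear[OF bounded_linear_time \<alpha>]])
    (simp_all add: time_def future)

lemma strict_mono_time_\<beta>: "strict_mono_on I (\<lambda>v. time (\<beta> v))"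
  by (rule strict_mono_on_deriv_pos[OF I(2) has_real_derivative_bounded_linear[OF bounded_linear_time \<beta>]])
    (simp_all add: time_def future)

lemma strict_mono_time_diagonal: "strict_mono_on I (\<lambda>t. time (X (t, t)))"
proof (rule strict_mono_onI)
  fix r s assume "r \<in> I" "s \<in> I" "r < s"
  then show "time (X (r, r)) < time (X (s, s))"
    unfolding time_X using strict_mono_onD[OF strict_mono_time_\<alpha>] strict_mono_onD[OF strict_mono_time_\<beta>]
    by (simp add: add_strict_mono)
qed

lemma a_continuous: "continuous_on I a" and b_continuous: "continuous_on I b"
  by (rule a_C1[THEN C1_diff_imp_diff, THEN differentiable_imp_continuous_on],
      rule b_C1[THEN C1_diff_imp_diff, THEN differentiable_imp_continuous_on])

lemma b_nonzero: "t \<in> I \<Longrightarrow> b t \<noteq> 0"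
  using null[of t] by (auto simp: lor_def zero_prod_def)

text \<open>On a projectable interval the line orthogonal to \<open>m\<close> separates the projected null tangents;
  this makes \<open>drop_coord k \<circ> X\<close> injective there.\<close>
definition projectable :: "real set \<Rightarrow> bool" where
  "projectable J \<longleftrightarrow> J \<subseteq> I \<and>
    (\<exists>k\<in>{1, 2}. \<exists>m. \<forall>s\<in>J. 0 < inner m (drop_coord k (a s)) \<and> inner m (drop_coord k (b s)) < 0)"

lemma projectable_subset: "projectable J \<Longrightarrow> J' \<subseteq> J \<Longrightarrow> projectable J'"
  unfolding projectable_def by blast

lemma drop_coord_independent:
  assumes t: "t \<in> I"
  shows "\<exists>k\<in>{1, 2}. fst (drop_coord k (a t)) * snd (drop_coord k (b t))
    - snd (drop_coord k (a t)) * fst (drop_coord k (b t)) \<noteq> 0"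
proof (rule ccontr)
  obtain x y z x' y' z' where ab: "a t = (x, y, z)" "b t = (x', y', z')"
    by (cases "a t"; cases "b t") auto
  assume "\<not> ?thesis"
  then have "y * z' = z * y'" "x * z' = z * x'"
    by (auto simp: ab drop_coord_def)
  moreover have "z' \<noteq> 0"
    using null_vector_time_nonzero[of "b t"] null[OF t] b_nonzero[OF t] ab by simp
  ultimately have "x = (z / z') * x'" "y = (z / z') * y'" "z = (z / z') * z'"
    by (simp_all add: field_simps)
  then have "a t = (z / z') *\<^sub>R b t"
    by (simp add: ab)
  then have "lor (a t) (b t) = (z / z') * lor (b t) (b t)"
    by (simp add: lor_scaleR_left)
  then show False
    using null[OF t] by simp
qed

lemma projectable_ball:
  assumes t0: "t0 \<in> I"
  shows "\<exists>r>0. projectable (ball t0 r)"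
proof -
  obtain k where k: "k \<in> {1, 2}" and det: "fst (drop_coord k (a t0)) * snd (drop_coord k (b t0))
      - snd (drop_coord k (a t0)) * fst (drop_coord k (b t0)) \<noteq> 0"
    using drop_coord_independent[OF t0] by blast
  obtain p1 p2 r1 r2 where pr: "drop_coord k (a t0) = (p1, p2)" "drop_coord k (b t0) = (r1, r2)"
    by (cases "drop_coord k (a t0)"; cases "drop_coord k (b t0)") auto
  define m where "m = (p1 * r2 - p2 * r1) *\<^sub>R (p2 + r2, - (p1 + r1))"
  define f where "f s = (inner m (drop_coord k (a s)), inner m (drop_coord k (b s)))" for s
  have "continuous_on I f"
    unfolding f_def using a_continuous b_continuous
    by (intro continuous_intros continuous_on_compose2[OF linear_continuous_on[OF bounded_linear_drop_coord]]) auto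
  then have "open (I \<inter> f -` ({0<..} \<times> {..<0}))"
    by (rule continuous_open_preimage[OF _ I(1)]) (auto intro: open_Times)
  moreover have "f t0 = ((p1 * r2 - p2 * r1)\<^sup>2, - (p1 * r2 - p2 * r1)\<^sup>2)"
    by (simp add: f_def m_def pr power2_eq_square algebra_simps)
  then have "f t0 \<in> {0<..} \<times> {..<0}"
    using det by (simp add: pr)
  ultimately obtain r where r: "0 < r" "ball t0 r \<subseteq> I \<inter> f -` ({0<..} \<times> {..<0})"
    using t0 open_contains_ball by blast
  then have "\<forall>s\<in>ball t0 r. 0 < inner m (drop_coord k (a s)) \<and> inner m (drop_coord k (b s)) < 0"
    unfolding f_def by (auto simp: subset_iff)
  then have "projectable (ball t0 r)"
    unfolding projectable_def using r(2) k by blast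
  then show ?thesis
    using r(1) by blast
qed

text \<open>The factor 8 is the slack needed in \<open>slab_confines_parameters\<close>.\<close>
definition radius :: "real \<Rightarrow> real" where
  "radius t = ball_radius projectable t / 8"

lemma radius_pos: "t \<in> I \<Longrightarrow> 0 < radius t"
  using ball_radius_pos[OF projectable_subset projectable_ball] by (simp add: radius_def)

lemma projectable_radius: "t \<in> I \<Longrightarrow> projectable (ball t (8 * radius t))"
  using ball_radius_ball[OF projectable_subset projectable_ball] by (simp add: radius_def)

lemma radius_lipschitz: "t \<in> I \<Longrightarrow> t0 \<in> I \<Longrightarrow> radius t \<le> radius t0 + \<bar>t - t0\<bar> / 8"
  using ball_radius_lipschitz[OF projectable_subset projectable_ball, where x = t and y = t0]
  by (simp add: radius_def dist_real_def)

lemma near_in_I: "t \<in> I \<Longrightarrow> \<bar>x - t\<bar> < 8 * radius t \<Longrightarrow> x \<in> I"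
  using projectable_radius[of t] unfolding projectable_def by (auto simp: dist_real_def abs_minus_commute)

definition params :: "(real \<times> real) set" where
  "params = (\<Union>t\<in>I. ball t (radius t) \<times> ball t (radius t))"

definition surface :: "R3 set" where
  "surface = X ` params"

definition slab :: "real \<Rightarrow> R3 set" where
  "slab t = {q. time (X (t - radius t, t - radius t)) < time q \<and> time q < time (X (t + radius t, t + radius t))}"

lemma open_params: "open params"
  unfolding params_def by (intro open_UN ballI open_Times open_ball)

lemma params_subset: "params \<subseteq> I \<times> I"
  unfolding params_def using radius_pos near_in_I
  by (force simp: dist_real_def abs_minus_commute)

lemma diagonal_in_params: "t \<in> I \<Longrightarrow> (t, t) \<in> params"
  unfolding params_def using radius_pos by force

lemma open_slab: "open (slab t)"
  unfolding slab_def time_def by (intro open_Collect_conj open_Collect_less continuous_intros)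

lemma X_in_slab:
  assumes t: "t \<in> I" and w: "w \<in> ball t (radius t) \<times> ball t (radius t)"
  shows "X w \<in> slab t"
proof -
  have r: "0 < radius t"
    using radius_pos[OF t] .
  have I4: "t - radius t \<in> I" "t + radius t \<in> I" "fst w \<in> I" "snd w \<in> I"
    using near_in_I[OF t] r w by (auto simp: dist_real_def abs_minus_commute)
  have "t - radius t < fst w" "t - radius t < snd w" "fst w < t + radius t" "snd w < t + radius t"
    using w by (auto simp: dist_real_def)
  then show ?thesis
    using I4 by (auto simp: slab_def time_X intro!: add_strict_mono
        strict_mono_onD[OF strict_mono_time_\<alpha>] strict_mono_onD[OF strict_mono_time_\<beta>])
qed

text \<open>Time increases in both parameters and the radius varies slowly.\<close>
lemma slab_confines_parameters:
  assumes t0: "t0 \<in> I" and w: "w \<in> params" and X: "X w \<in> slab t0"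
  shows "w \<in> ball t0 (4 * radius t0) \<times> ball t0 (4 * radius t0)"
proof -
  obtain t where t: "t \<in> I" and u: "\<bar>fst w - t\<bar> < radius t" and v: "\<bar>snd w - t\<bar> < radius t"
    using w unfolding params_def by (force simp: dist_real_def abs_minus_commute mem_Times_iff)
  have "0 < radius t" "0 < radius t0"
    using radius_pos t t0 by auto
  then have I4: "t - radius t \<in> I" "t + radius t \<in> I" "t0 - radius t0 \<in> I" "t0 + radius t0 \<in> I"
    using near_in_I t t0 by auto
  have "X w \<in> slab t"
    using X_in_slab[OF t] u v by (simp add: mem_Times_iff dist_real_def abs_minus_commute)
  then have "time (X (t - radius t, t - radius t)) < time (X (t0 + radius t0, t0 + radius t0))"
    and "time (X (t0 - radius t0, t0 - radius t0)) < time (X (t + radius t, t + radius t))"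
    using X by (auto simp: slab_def)
  then have "t - radius t < t0 + radius t0" "t0 - radius t0 < t + radius t"
    using strict_mono_on_less[OF strict_mono_time_diagonal] I4 by auto
  then show ?thesis
    using u v radius_lipschitz[OF t t0] by (simp add: mem_Times_iff dist_real_def abs_less_iff) argo
qed

end

context null_parametrization
begin

lemma X_has_derivative:
  assumes "w \<in> I \<times> I"
  shows "(X has_derivative (\<lambda>h. fst h *\<^sub>R a (fst w) + snd h *\<^sub>R b (snd w))) (at w)"
proof -
  have "((\<lambda>w. \<alpha> (fst w)) has_derivative (\<lambda>h. fst h *\<^sub>R a (fst w))) (at w)"
    and "((\<lambda>w. \<beta> (snd w)) has_derivative (\<lambda>h. snd h *\<^sub>R b (snd w))) (at w)"
    using assms \<alpha>[of "fst w"] \<beta>[of "snd w"] unfolding has_vector_derivative_def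
    by (auto intro: has_derivative_compose[OF has_derivative_fst[OF has_derivative_ident]]
        has_derivative_compose[OF has_derivative_snd[OF has_derivative_ident]])
  then show ?thesis
    unfolding X_def[abs_def] by (rule has_derivative_add)
qed

end

locale projected_chart = null_parametrization +
  fixes J :: "real set" and k :: nat and m :: "real \<times> real" and W :: "(real \<times> real) set"
  assumes J: "is_interval J" "J \<subseteq> I" and k: "k \<in> {1, 2}"
    and separating: "\<And>s. s \<in> J \<Longrightarrow> 0 < inner m (drop_coord k (a s)) \<and> inner m (drop_coord k (b s)) < 0"
    and W: "open W" "W \<subseteq> J \<times> J"
begin

definition F :: "real \<times> real \<Rightarrow> real \<times> real" where
  "F w = drop_coord k (X w)"

definition U :: "(real \<times> real) set" where
  "U = F ` W"

definition G :: "real \<times> real \<Rightarrow> real \<times> real" where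
  "G = inv_into W F"

definition \<psi> :: "real \<times> real \<Rightarrow> real" where
  "\<psi> y = coord k (X (G y))"

lemma W_subset: "W \<subseteq> I \<times> I"
  using W(2) J(2) by blast

text \<open>\<open>(a1, a2)\<close>, \<open>(b1, b2)\<close> are the projected null tangents and \<open>ak\<close>, \<open>bk\<close> their graph
  components.\<close>
definition a1 :: "real \<times> real \<Rightarrow> real" where "a1 w = fst (drop_coord k (a (fst w)))"
definition a2 :: "real \<times> real \<Rightarrow> real" where "a2 w = snd (drop_coord k (a (fst w)))"
definition ak :: "real \<times> real \<Rightarrow> real" where "ak w = coord k (a (fst w))"
definition b1 :: "real \<times> real \<Rightarrow> real" where "b1 w = fst (drop_coord k (b (snd w)))"
definition b2 :: "real \<times> real \<Rightarrow> real" where "b2 w = snd (drop_coord k (b (snd w)))"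
definition bk :: "real \<times> real \<Rightarrow> real" where "bk w = coord k (b (snd w))"

definition jac :: "real \<times> real \<Rightarrow> real" where
  "jac w = a1 w * b2 w - a2 w * b1 w"

text \<open>The gradient of \<open>\<psi>\<close> at \<open>F w\<close>, solving \<open>g \<bullet> (a1, a2) = ak\<close> and \<open>g \<bullet> (b1, b2) = bk\<close>.\<close>
definition grad1 :: "real \<times> real \<Rightarrow> real" where
  "grad1 w = (ak w * b2 w - bk w * a2 w) / jac w"

definition grad2 :: "real \<times> real \<Rightarrow> real" where
  "grad2 w = (bk w * a1 w - ak w * b1 w) / jac w"

lemma time_sign: "w \<in> J \<times> J \<Longrightarrow> 0 < \<sigma> * a2 w \<and> 0 < \<sigma> * b2 w"
  using future J(2) by (auto simp: a2_def b2_def snd_drop_coord)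

lemma jac_nonzero: "w \<in> J \<times> J \<Longrightarrow> jac w \<noteq> 0"
proof
  assume w: "w \<in> J \<times> J" and "jac w = 0"
  have sep: "0 < inner m (drop_coord k (a (fst w)))" "inner m (drop_coord k (b (snd w))) < 0"
    using separating w by auto
  have "b2 w * inner m (drop_coord k (a (fst w))) - a2 w * inner m (drop_coord k (b (snd w))) = fst m * jac w"
    by (simp add: jac_def a1_def a2_def b1_def b2_def inner_prod_def algebra_simps)
  then have "(\<sigma> * b2 w) * inner m (drop_coord k (a (fst w))) = (\<sigma> * a2 w) * inner m (drop_coord k (b (snd w)))"
    using \<open>jac w = 0\<close> by (simp add: algebra_simps)
  then show False
    using sep time_sign[OF w] by (metis mult_pos_pos mult_pos_neg less_asym)
qed

lemma F_inj: "inj_on F (J \<times> J)"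
proof -
  have lin: "bounded_linear (\<lambda>q. inner m (drop_coord k q))"
    by (rule bounded_linear_compose[OF bounded_linear_inner_right bounded_linear_drop_coord])
  have inner_\<alpha>: "strict_mono_on J (\<lambda>u. inner m (drop_coord k (\<alpha> u)))"
    using J(2) separating
    by (intro strict_mono_on_deriv_pos[OF J(1) has_real_derivative_bounded_linear[OF lin \<alpha>]]) auto
  have inner_\<beta>: "strict_mono_on J (\<lambda>v. - inner m (drop_coord k (\<beta> v)))"
    using J(2) separating has_real_derivative_bounded_linear[OF lin \<beta>]
    by (intro strict_mono_on_deriv_pos[OF J(1) DERIV_minus]) auto
  have time_\<alpha>: "strict_mono_on J (\<lambda>u. time (\<alpha> u))" and time_\<beta>: "strict_mono_on J (\<lambda>v. time (\<beta> v))"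
    using strict_mono_time_\<alpha> strict_mono_time_\<beta> J(2) by (auto intro: monotone_on_subset)
  have "inj_on (\<lambda>w. (time (\<alpha> (fst w)) + time (\<beta> (snd w)),
      inner m (drop_coord k (\<alpha> (fst w))) + inner m (drop_coord k (\<beta> (snd w))))) (J \<times> J)"
    by (rule inj_on_monotone_sums[OF time_\<alpha> time_\<beta> inner_\<alpha> inner_\<beta>])
  moreover have "(time (\<alpha> (fst w)) + time (\<beta> (snd w)),
      inner m (drop_coord k (\<alpha> (fst w))) + inner m (drop_coord k (\<beta> (snd w)))) = (\<sigma> * snd (F w), inner m (F w))" for w
    by (simp add: F_def X_def time_def drop_coord_add snd_drop_coord inner_add_right algebra_simps)
  ultimately show ?thesis
    by (simp add: inj_on_def)
qed

definition dF :: "real \<times> real \<Rightarrow> real \<times> real \<Rightarrow> real \<times> real" where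
  "dF w h = (fst h * a1 w + snd h * b1 w, fst h * a2 w + snd h * b2 w)"

definition inv11 :: "real \<times> real \<Rightarrow> real" where "inv11 w = b2 w / jac w"
definition inv12 :: "real \<times> real \<Rightarrow> real" where "inv12 w = - b1 w / jac w"
definition inv21 :: "real \<times> real \<Rightarrow> real" where "inv21 w = - a2 w / jac w"
definition inv22 :: "real \<times> real \<Rightarrow> real" where "inv22 w = a1 w / jac w"

definition dG :: "real \<times> real \<Rightarrow> real \<times> real \<Rightarrow> real \<times> real" where
  "dG w y = (fst y * inv11 w + snd y * inv12 w, fst y * inv21 w + snd y * inv22 w)"

lemma F_has_derivative:
  assumes "w \<in> I \<times> I"
  shows "(F has_derivative dF w) (at w)"
  using bounded_linear.has_derivative[OF bounded_linear_drop_coord X_has_derivative[OF assms]]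
  unfolding F_def[abs_def]
  by (rule has_derivative_eq_rhs)
    (simp add: fun_eq_iff prod_eq_iff dF_def drop_coord_add drop_coord_scaleR a1_def a2_def b1_def b2_def)

lemma dF_dG:
  assumes "w \<in> J \<times> J"
  shows "dF w \<circ> dG w = id"
proof
  fix y
  have "jac w \<noteq> 0"
    using jac_nonzero[OF assms] .
  then show "(dF w \<circ> dG w) y = id y"
    by (simp add: dF_def dG_def inv11_def inv12_def inv21_def inv22_def prod_eq_iff field_simps)
      (simp add: jac_def algebra_simps)
qed

lemma continuous_on_F: "continuous_on W F"
  using F_has_derivative W_subset by (blast intro: has_derivative_imp_continuous_on)

lemma open_U: "open U"
  unfolding U_def
  using invariance_of_domain[OF continuous_on_F W(1) inj_on_subset[OF F_inj W(2)]] .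

lemma G_F: "w \<in> W \<Longrightarrow> G (F w) = w"
  unfolding G_def using inj_on_subset[OF F_inj W(2)] by (rule inv_into_f_f)

lemma G_U: "y \<in> U \<Longrightarrow> G y \<in> W \<and> F (G y) = y"
  unfolding U_def using G_F by auto

lemma G_has_derivative:
  assumes "y \<in> U"
  shows "(G has_derivative dG (G y)) (at y)"
proof -
  have "G y \<in> W" "F (G y) = y"
    using G_U[OF assms] by auto
  then show ?thesis
    using has_derivative_inverse_strong[OF W(1) _ continuous_on_F G_F F_has_derivative dF_dG] W_subset W(2)
    by (metis subsetD)
qed

lemma bounded_linear_fst_drop_coord: "bounded_linear (\<lambda>q. fst (drop_coord k q))"
  and bounded_linear_snd_drop_coord: "bounded_linear (\<lambda>q. snd (drop_coord k q))"
  by (simp_all add: bounded_linear_fst_comp bounded_linear_snd_comp bounded_linear_drop_coord)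

lemma C1_on_components: "C1_on W a1" "C1_on W a2" "C1_on W ak" "C1_on W b1" "C1_on W b2" "C1_on W bk"
proof -
  have fW: "fst ` W \<subseteq> I" and sW: "snd ` W \<subseteq> I"
    using W_subset by auto
  have C1: "C1_on W (\<lambda>w. L (a (fst w)))" "C1_on W (\<lambda>w. L (b (snd w)))"
    if "bounded_linear L" for L :: "R3 \<Rightarrow> real"
    using C1_on_fst[OF C1_differentiable_on_bounded_linear[OF that a_C1] fW]
      C1_on_snd[OF C1_differentiable_on_bounded_linear[OF that b_C1] sW] .
  from C1[OF bounded_linear_fst_drop_coord] C1[OF bounded_linear_snd_drop_coord] C1[OF bounded_linear_coord]
  show "C1_on W a1" "C1_on W a2" "C1_on W ak" "C1_on W b1" "C1_on W b2" "C1_on W bk"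
    unfolding a1_def[abs_def] a2_def[abs_def] ak_def[abs_def] b1_def[abs_def] b2_def[abs_def] bk_def[abs_def]
    by blast+
qed

lemma jac_nonzero_on_W: "w \<in> W \<Longrightarrow> jac w \<noteq> 0"
  using jac_nonzero W(2) by blast

lemma C1_on_grad: "C1_on W grad1" "C1_on W grad2"
  unfolding grad1_def[abs_def] grad2_def[abs_def] jac_def[abs_def]
  using C1_on_components jac_nonzero_on_W[unfolded jac_def]
  by (auto intro!: C1_on_divide C1_on_diff C1_on_mult)

lemma continuous_on_dG: "continuous_on U (\<lambda>y. inv11 (G y))" "continuous_on U (\<lambda>y. inv12 (G y))"
  "continuous_on U (\<lambda>y. inv21 (G y))" "continuous_on U (\<lambda>y. inv22 (G y))"
proof -
  have "continuous_on U G"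
    using G_has_derivative by (rule has_derivative_imp_continuous_on)
  moreover have "continuous_on W inv11" "continuous_on W inv12" "continuous_on W inv21" "continuous_on W inv22"
    unfolding inv11_def[abs_def] inv12_def[abs_def] inv21_def[abs_def] inv22_def[abs_def]
    using C1_on_components[THEN C1_on_continuous] jac_nonzero_on_W
      C1_on_continuous[OF C1_on_diff[OF C1_on_mult C1_on_mult]] C1_on_components
    by (auto intro!: continuous_intros simp: jac_def[abs_def])
  ultimately show "continuous_on U (\<lambda>y. inv11 (G y))" "continuous_on U (\<lambda>y. inv12 (G y))"
    "continuous_on U (\<lambda>y. inv21 (G y))" "continuous_on U (\<lambda>y. inv22 (G y))"
    using G_U by (auto intro: continuous_on_compose2)
qed

lemma coord_X_gradient: "has_gradient_on W (\<lambda>w. coord k (X w)) ak bk"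
  unfolding has_gradient_on_def
proof (intro conjI ballI)
  show "continuous_on W ak" "continuous_on W bk"
    using C1_on_components by (auto intro: C1_on_continuous)
  fix w assume "w \<in> W"
  then show "((\<lambda>w. coord k (X w)) has_derivative (\<lambda>h. fst h * ak w + snd h * bk w)) (at w)"
    using bounded_linear.has_derivative[OF bounded_linear_coord X_has_derivative] W_subset
    by (force simp: coord_add coord_scaleR ak_def bk_def)
qed

lemma grad_eq: "w \<in> W \<Longrightarrow> inv11 w * ak w + inv21 w * bk w = grad1 w \<and> inv12 w * ak w + inv22 w * bk w = grad2 w"
  using jac_nonzero_on_W[of w]
  by (simp add: inv11_def inv12_def inv21_def inv22_def grad1_def grad2_def field_simps)

lemma has_gradient_on_G:
  assumes "has_gradient_on W \<phi> fu fv"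
  shows "has_gradient_on U (\<lambda>y. \<phi> (G y))
    (\<lambda>y. inv11 (G y) * fu (G y) + inv21 (G y) * fv (G y)) (\<lambda>y. inv12 (G y) * fu (G y) + inv22 (G y) * fv (G y))"
  using G_has_derivative G_U
  by (intro has_gradient_on_compose[OF assms _ _ continuous_on_dG]) (auto simp: dG_def[abs_def])

lemma \<psi>_gradient: "has_gradient_on U \<psi> (\<lambda>y. grad1 (G y)) (\<lambda>y. grad2 (G y))"
  by (rule has_gradient_on_transform[OF open_U has_gradient_on_G[OF coord_X_gradient]])
    (simp_all add: \<psi>_def grad_eq G_U)

lemma grad_relations:
  assumes "w \<in> W"
  shows "grad1 w * a1 w + grad2 w * a2 w = ak w" and "grad1 w * b1 w + grad2 w * b2 w = bk w"
  using jac_nonzero_on_W[OF assms]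
  by (simp_all add: grad1_def grad2_def field_simps) (simp_all add: jac_def algebra_simps)

lemma null_components:
  assumes "w \<in> W"
  shows "(ak w)\<^sup>2 + (a1 w)\<^sup>2 - (a2 w)\<^sup>2 = 0" and "(bk w)\<^sup>2 + (b1 w)\<^sup>2 - (b2 w)\<^sup>2 = 0"
  using lor_drop_coord[OF k, of "a (fst w)"] lor_drop_coord[OF k, of "b (snd w)"] null assms W_subset
  by (auto simp: ak_def a1_def a2_def bk_def b1_def b2_def)

text \<open>The relations of \<open>grad_relations\<close>, differentiated along the parameter on which the
  tangent involved does not depend.\<close>
lemma grad_derivative_relations:
  assumes g1: "has_gradient_on W grad1 fu1 fv1" and g2: "has_gradient_on W grad2 fu2 fv2" and w: "w \<in> W"
  shows "fv1 w * a1 w + fv2 w * a2 w = 0" and "fu1 w * b1 w + fu2 w * b2 w = 0"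
proof -
  have fw: "fst w \<in> I" and sw: "snd w \<in> I"
    using w W_subset by auto
  have d1: "(grad1 has_derivative (\<lambda>h. fst h * fu1 w + snd h * fv1 w)) (at w)"
    and d2: "(grad2 has_derivative (\<lambda>h. fst h * fu2 w + snd h * fv2 w)) (at w)"
    using g1 g2 w unfolding has_gradient_on_def by blast+
  obtain da1 da2 dak where
    "(a1 has_derivative (\<lambda>h. fst h * da1)) (at w)" "(a2 has_derivative (\<lambda>h. fst h * da2)) (at w)"
    "(ak has_derivative (\<lambda>h. fst h * dak)) (at w)"
  proof -
    note D = has_derivative_fst_C1[OF C1_differentiable_on_bounded_linear[OF _ a_C1] fw]
    from D[OF bounded_linear_fst_drop_coord] D[OF bounded_linear_snd_drop_coord] D[OF bounded_linear_coord[of k]] that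
    show thesis
      unfolding a1_def[abs_def] a2_def[abs_def] ak_def[abs_def] by blast
  qed
  from has_derivative_product_identity[OF W(1) w grad_relations(1) d1 d2 this, of "(0, 1)"]
  show "fv1 w * a1 w + fv2 w * a2 w = 0"
    by simp
  obtain db1 db2 dbk where
    "(b1 has_derivative (\<lambda>h. snd h * db1)) (at w)" "(b2 has_derivative (\<lambda>h. snd h * db2)) (at w)"
    "(bk has_derivative (\<lambda>h. snd h * dbk)) (at w)"
  proof -
    note D = has_derivative_snd_C1[OF C1_differentiable_on_bounded_linear[OF _ b_C1] sw]
    from D[OF bounded_linear_fst_drop_coord] D[OF bounded_linear_snd_drop_coord] D[OF bounded_linear_coord[of k]] that
    show thesis
      unfolding b1_def[abs_def] b2_def[abs_def] bk_def[abs_def] by blast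
  qed
  from has_derivative_product_identity[OF W(1) w grad_relations(2) d1 d2 this, of "(1, 0)"]
  show "fu1 w * b1 w + fu2 w * b2 w = 0"
    by simp
qed

lemma born_infeld_\<psi>: "born_infeld U \<psi>"
proof -
  obtain fu1 fv1 fu2 fv2 where g1: "has_gradient_on W grad1 fu1 fv1" and g2: "has_gradient_on W grad2 fu2 fv2"
    using C1_on_grad unfolding C1_on_def by blast
  note C = C2_on_gradients[OF open_U \<psi>_gradient has_gradient_on_G[OF g1] has_gradient_on_G[OF g2]]
  have "(1 - (pv \<psi> y)\<^sup>2) * pu (pu \<psi>) y + 2 * pu \<psi> y * pv \<psi> y * pv (pu \<psi>) y
      - (1 + (pu \<psi> y)\<^sup>2) * pv (pv \<psi>) y = 0" if y: "y \<in> U" for y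
  proof -
    define w where "w = G y"
    have w: "w \<in> W"
      using G_U[OF y] by (simp add: w_def)
    have nonzero: "a2 w \<noteq> 0" "b2 w \<noteq> 0"
      using time_sign w W(2) by fastforce+
    have null_lifts: "(grad1 w * a1 w + grad2 w * a2 w)\<^sup>2 + (a1 w)\<^sup>2 - (a2 w)\<^sup>2 = 0"
      "(grad1 w * b1 w + grad2 w * b2 w)\<^sup>2 + (b1 w)\<^sup>2 - (b2 w)\<^sup>2 = 0"
      using grad_relations[OF w] null_components[OF w] by simp_all
    note identity = born_infeld_identity[OF jac_nonzero_on_W[OF w, unfolded jac_def] nonzero null_lifts
        grad_derivative_relations[OF g1 g2 w]]
    have "inv11 w * fu1 w + inv21 w * fv1 w = (fu1 w * b2 w - fv1 w * a2 w) / (a1 w * b2 w - a2 w * b1 w)"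
      "inv12 w * fu1 w + inv22 w * fv1 w = (fv1 w * a1 w - fu1 w * b1 w) / (a1 w * b2 w - a2 w * b1 w)"
      "inv12 w * fu2 w + inv22 w * fv2 w = (fv2 w * a1 w - fu2 w * b1 w) / (a1 w * b2 w - a2 w * b1 w)"
      by (simp_all add: inv11_def inv12_def inv21_def inv22_def jac_def diff_divide_distrib algebra_simps)
    then show ?thesis
      using identity C(2)[OF y] by (simp add: w_def algebra_simps)
  qed
  then show ?thesis
    unfolding born_infeld_def using open_U C(1) by blast
qed

lemma graph_pt_F: "w \<in> W \<Longrightarrow> graph_pt k \<psi> (F w) = X w"
  using graph_pt_drop_coord[OF k, of \<psi> "X w"] G_F by (simp add: \<psi>_def F_def)

lemma graph_image: "graph_pt k \<psi> ` U = X ` W"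
  unfolding U_def image_image using graph_pt_F by (auto intro: image_cong)

lemma X_G_drop_coord: "q \<in> X ` W \<Longrightarrow> X (G (drop_coord k q)) = q"
  using G_F by (auto simp: F_def[symmetric])

text \<open>Near \<open>s0\<close> the curve factors as \<open>X \<circ> G \<circ> drop_coord k \<circ> \<gamma>\<close>.\<close>
lemma curve_tangent:
  assumes w0: "w0 \<in> W" and \<gamma>: "(\<gamma> has_vector_derivative \<gamma>') (at s0)" "\<gamma> s0 = X w0"
    and near: "eventually (\<lambda>s. \<gamma> s \<in> X ` W) (nhds s0)"
  shows "\<exists>c1 c2. \<gamma>' = c1 *\<^sub>R a (fst w0) + c2 *\<^sub>R b (snd w0)"
proof -
  define v where "v = dG w0 (drop_coord k \<gamma>')"
  have drop: "((\<lambda>s. drop_coord k (\<gamma> s)) has_derivative (\<lambda>h. h *\<^sub>R drop_coord k \<gamma>')) (at s0)"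
    using bounded_linear.has_derivative[OF bounded_linear_drop_coord \<gamma>(1)[unfolded has_vector_derivative_def]]
    by (simp add: drop_coord_scaleR)
  have "drop_coord k (\<gamma> s0) = F w0" "F w0 \<in> U"
    using \<gamma>(2) w0 by (simp_all add: F_def U_def)
  then have dG: "(G has_derivative dG w0) (at (drop_coord k (\<gamma> s0)))" and G0: "G (drop_coord k (\<gamma> s0)) = w0"
    using G_has_derivative[of "F w0"] G_F[OF w0] by simp_all
  have "(X has_derivative (\<lambda>h. fst h *\<^sub>R a (fst w0) + snd h *\<^sub>R b (snd w0))) (at (G (drop_coord k (\<gamma> s0))))"
    using X_has_derivative[of w0] w0 W_subset G0 by auto
  from has_derivative_compose[OF has_derivative_compose[OF drop dG] this]
  have "((\<lambda>s. X (G (drop_coord k (\<gamma> s)))) has_vector_derivative fst v *\<^sub>R a (fst w0) + snd v *\<^sub>R b (snd w0)) (at s0)"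
    unfolding has_vector_derivative_def
    by (rule has_derivative_eq_rhs) (simp add: fun_eq_iff v_def dG_def algebra_simps)
  moreover have "eventually (\<lambda>s. s \<in> UNIV \<longrightarrow> X (G (drop_coord k (\<gamma> s))) = \<gamma> s) (nhds s0)"
    using near by eventually_elim (simp add: X_G_drop_coord)
  moreover have "X (G (drop_coord k (\<gamma> s0))) = \<gamma> s0"
    using X_G_drop_coord \<gamma>(2) w0 by simp
  ultimately have "(\<gamma> has_vector_derivative fst v *\<^sub>R a (fst w0) + snd v *\<^sub>R b (snd w0)) (at s0)"
    by (subst (asm) has_vector_derivative_cong_ev) auto
  then show ?thesis
    using vector_derivative_unique_at[OF \<gamma>(1)] by blast
qed

end

section \<open>Born-Infeld charts of the surface\<close>

definition graph_tangent_u :: "nat \<Rightarrow> real \<Rightarrow> R3" where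
  "graph_tangent_u k d = (if k = 1 then (d, 1, 0) else if k = 2 then (1, d, 0) else (1, 0, d))"

definition graph_tangent_v :: "nat \<Rightarrow> real \<Rightarrow> R3" where
  "graph_tangent_v k d = (if k = 1 then (d, 0, 1) else if k = 2 then (0, d, 1) else (0, 1, d))"

lemma graph_pt_has_vector_derivative_u:
  assumes "((\<lambda>s. \<psi> (s, y)) has_real_derivative d) (at x)"
  shows "((\<lambda>s. graph_pt k \<psi> (s, y)) has_vector_derivative graph_tangent_u k d) (at x)"
  using assms unfolding graph_pt_def graph_tangent_u_def has_real_derivative_iff_has_vector_derivative
  by (auto intro!: has_vector_derivative_Pair has_vector_derivative_id has_vector_derivative_const)

lemma graph_pt_has_vector_derivative_v:
  assumes "((\<lambda>s. \<psi> (x, s)) has_real_derivative d) (at y)"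
  shows "((\<lambda>s. graph_pt k \<psi> (x, s)) has_vector_derivative graph_tangent_v k d) (at y)"
  using assms unfolding graph_pt_def graph_tangent_v_def has_real_derivative_iff_has_vector_derivative
  by (auto intro!: has_vector_derivative_Pair has_vector_derivative_id has_vector_derivative_const)

lemma graph_normal_orthogonal:
  "lor (graph_normal k \<psi> q) (graph_tangent_u k (pu \<psi> q)) = 0"
  "lor (graph_normal k \<psi> q) (graph_tangent_v k (pv \<psi> q)) = 0"
  by (auto simp: graph_normal_def graph_tangent_u_def graph_tangent_v_def lor_def)

lemma graph_tangents_independent:
  "x *\<^sub>R graph_tangent_u k d1 = y *\<^sub>R graph_tangent_v k d2 \<Longrightarrow> x = 0 \<and> y = 0"
  by (auto simp: graph_tangent_u_def graph_tangent_v_def split: if_splits)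

lemma graph_normal_nonzero: "graph_normal k \<psi> q \<noteq> 0"
  by (auto simp: graph_normal_def zero_prod_def)

lemma lor_orthogonal_span:
  assumes T1: "T1 = c1 *\<^sub>R A + c2 *\<^sub>R B" and T2: "T2 = c3 *\<^sub>R A + c4 *\<^sub>R B"
    and indep: "\<And>x y. x *\<^sub>R T1 = y *\<^sub>R T2 \<Longrightarrow> x = 0 \<and> y = 0"
    and n: "lor n T1 = 0" "lor n T2 = 0"
  shows "lor n A = 0 \<and> lor n B = 0"
proof -
  have det: "c1 * c4 - c2 * c3 \<noteq> 0"
  proof
    assume det: "c1 * c4 - c2 * c3 = 0"
    have "c4 *\<^sub>R T1 - c2 *\<^sub>R T2 = (c1 * c4 - c2 * c3) *\<^sub>R A" "c3 *\<^sub>R T1 - c1 *\<^sub>R T2 = (c3 * c2 - c1 * c4) *\<^sub>R B"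
      by (simp_all add: T1 T2 algebra_simps)
    then have "c4 *\<^sub>R T1 = c2 *\<^sub>R T2" "c3 *\<^sub>R T1 = c1 *\<^sub>R T2"
      using det by (simp_all add: algebra_simps)
    then have "c1 = 0 \<and> c2 = 0"
      using indep by blast
    then show False
      using indep[of 1 0] T1 by simp
  qed
  have e: "c1 * lor n A + c2 * lor n B = 0" "c3 * lor n A + c4 * lor n B = 0"
    using n by (simp_all add: T1 T2 lor_linear)
  have "(c1 * c4 - c2 * c3) * lor n A = 0"
    using arg_cong2[where f = "\<lambda>x y. c4 * x - c2 * y", OF e] by (simp add: algebra_simps)
  moreover have "(c1 * c4 - c2 * c3) * lor n B = 0"
    using arg_cong2[where f = "\<lambda>x y. c1 * y - c3 * x", OF e] by (simp add: algebra_simps)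
  ultimately show ?thesis
    using det by simp
qed

lemma eventually_nhds_isCont_open:
  "isCont f x \<Longrightarrow> open S \<Longrightarrow> f x \<in> S \<Longrightarrow> eventually (\<lambda>y. f y \<in> S) (nhds x)"
  unfolding isCont_def tendsto_at_iff_tendsto_nhds by (rule topological_tendstoD)

context null_parametrization
begin

definition slab_params :: "real \<Rightarrow> (real \<times> real) set" where
  "slab_params t = {w \<in> params. X w \<in> slab t}"

lemma open_slab_params: "open (slab_params t)"
proof -
  have "continuous_on params X"
    by (rule has_derivative_imp_continuous_on[OF X_has_derivative]) (use params_subset in blast)
  then have "open (params \<inter> X -` slab t)"
    using continuous_open_preimage open_params open_slab by blast
  moreover have "slab_params t = params \<inter> X -` slab t"
    by (auto simp: slab_params_def)
  ultimately show ?thesis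
    by simp
qed

lemma surface_slab: "surface \<inter> slab t = X ` slab_params t"
  by (auto simp: surface_def slab_params_def)

lemma diagonal_in_slab_params: "t \<in> I \<Longrightarrow> (t, t) \<in> slab_params t"
  unfolding slab_params_def using diagonal_in_params X_in_slab radius_pos by auto

lemma projected_chart_slab:
  assumes t: "t \<in> I"
  obtains k m where "projected_chart I \<sigma> \<alpha> \<beta> a b (ball t (4 * radius t)) k m (slab_params t)"
proof -
  have "ball t (4 * radius t) \<subseteq> ball t (8 * radius t)"
    using radius_pos[OF t] by (intro subset_ball) simp
  then have "projectable (ball t (4 * radius t))"
    using projectable_radius[OF t] projectable_subset by blast
  then obtain k m where "ball t (4 * radius t) \<subseteq> I" "k \<in> {1, 2}"
    and "\<And>s. s \<in> ball t (4 * radius t) \<Longrightarrow> 0 < inner m (drop_coord k (a s)) \<and> inner m (drop_coord k (b s)) < 0"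
    unfolding projectable_def by blast
  moreover have "slab_params t \<subseteq> ball t (4 * radius t) \<times> ball t (4 * radius t)"
    using slab_confines_parameters[OF t] by (auto simp: slab_params_def)
  ultimately show thesis
    by (intro that projected_chart.intro null_parametrization_axioms projected_chart_axioms.intro
        is_interval_ball_real open_slab_params)
qed

lemma BI_chart_slab:
  assumes t: "t \<in> I"
  shows "\<exists>k U \<psi>. BI_chart surface (slab t) k U \<psi>"
proof -
  obtain k m where "projected_chart I \<sigma> \<alpha> \<beta> a b (ball t (4 * radius t)) k m (slab_params t)"
    using projected_chart_slab[OF t] .
  then interpret chart: projected_chart I \<sigma> \<alpha> \<beta> a b "ball t (4 * radius t)" k m "slab_params t" .
  have "BI_chart surface (slab t) k chart.U chart.\<psi>"
    unfolding BI_chart_def using open_slab chart.k chart.born_infeld_\<psi> chart.graph_image surface_slab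
    by auto
  then show ?thesis
    by blast
qed

theorem BI_general_surface_surface: "BI_general_surface surface"
  unfolding BI_general_surface_def
proof
  fix p assume "p \<in> surface"
  then obtain t w where t: "t \<in> I" and w: "w \<in> ball t (radius t) \<times> ball t (radius t)" and p: "p = X w"
    unfolding surface_def params_def by blast
  have "p \<in> slab t"
    using X_in_slab[OF t w] p by simp
  moreover obtain k U \<psi> where "BI_chart surface (slab t) k U \<psi>"
    using BI_chart_slab[OF t] by blast
  ultimately show "\<exists>V k U \<psi>. p \<in> V \<and> BI_chart surface V k U \<psi>"
    by blast
qed

lemma surface_curve_tangent:
  assumes t: "t \<in> I" and \<gamma>: "(\<gamma> has_vector_derivative \<gamma>') (at s0)" "\<gamma> s0 = X (t, t)"
    and near: "eventually (\<lambda>s. \<gamma> s \<in> surface) (nhds s0)"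
  shows "\<exists>c1 c2. \<gamma>' = c1 *\<^sub>R a t + c2 *\<^sub>R b t"
proof -
  obtain k m where "projected_chart I \<sigma> \<alpha> \<beta> a b (ball t (4 * radius t)) k m (slab_params t)"
    using projected_chart_slab[OF t] .
  then interpret chart: projected_chart I \<sigma> \<alpha> \<beta> a b "ball t (4 * radius t)" k m "slab_params t" .
  have "eventually (\<lambda>s. \<gamma> s \<in> slab t) (nhds s0)"
    using eventually_nhds_isCont_open[OF has_vector_derivative_continuous[OF \<gamma>(1)] open_slab]
      \<gamma>(2) diagonal_in_slab_params[OF t] by (simp add: slab_params_def)
  then have "eventually (\<lambda>s. \<gamma> s \<in> X ` slab_params t) (nhds s0)"
    using near by eventually_elim (use surface_slab in blast)
  then show ?thesis
    using chart.curve_tangent[OF diagonal_in_slab_params[OF t] \<gamma>] by simp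
qed

text \<open>The coordinate curves of any Born-Infeld chart through \<open>X (t, t)\<close> are curves in the surface,
  so the tangent plane of the chart is spanned by \<open>a t\<close> and \<open>b t\<close>.\<close>
lemma surface_normal_orthogonal:
  assumes t: "t \<in> I" and chart: "BI_chart surface V k U \<psi>"
    and q: "q \<in> U" "graph_pt k \<psi> q = X (t, t)"
  shows "lor (graph_normal k \<psi> q) (a t) = 0 \<and> lor (graph_normal k \<psi> q) (b t) = 0"
proof -
  have U: "open U" and partials: "has_partials_on U \<psi>" and graph: "graph_pt k \<psi> ` U \<subseteq> surface"
    using chart unfolding BI_chart_def born_infeld_def C2_on_def by auto
  have near: "eventually (\<lambda>s. graph_pt k \<psi> (f s) \<in> surface) (nhds s0)"
    if "isCont f s0" "f s0 = q" for f :: "real \<Rightarrow> real \<times> real" and s0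
  proof -
    have "eventually (\<lambda>s. f s \<in> U) (nhds s0)"
      using eventually_nhds_isCont_open[OF that(1) U] that(2) q(1) by simp
    then show ?thesis
      by (rule eventually_mono) (use graph in blast)
  qed
  have du: "((\<lambda>s. \<psi> (s, snd q)) has_real_derivative pu \<psi> q) (at (fst q))"
    and dv: "((\<lambda>s. \<psi> (fst q, s)) has_real_derivative pv \<psi> q) (at (snd q))"
    using partials q(1) unfolding has_partials_on_def pu_def pv_def
    by (simp_all add: DERIV_deriv_iff_real_differentiable)
  have "\<exists>c1 c2. graph_tangent_u k (pu \<psi> q) = c1 *\<^sub>R a t + c2 *\<^sub>R b t"
  proof (rule surface_curve_tangent[OF t graph_pt_has_vector_derivative_u[OF du]])
    show "graph_pt k \<psi> (fst q, snd q) = X (t, t)"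
      using q(2) by simp
    show "eventually (\<lambda>s. graph_pt k \<psi> (s, snd q) \<in> surface) (nhds (fst q))"
      by (rule near) (auto intro!: continuous_intros)
  qed
  moreover have "\<exists>c1 c2. graph_tangent_v k (pv \<psi> q) = c1 *\<^sub>R a t + c2 *\<^sub>R b t"
  proof (rule surface_curve_tangent[OF t graph_pt_has_vector_derivative_v[OF dv]])
    show "graph_pt k \<psi> (fst q, snd q) = X (t, t)"
      using q(2) by simp
    show "eventually (\<lambda>s. graph_pt k \<psi> (fst q, s) \<in> surface) (nhds (snd q))"
      by (rule near) (auto intro!: continuous_intros)
  qed
  ultimately obtain c1 c2 c3 c4 where
    "graph_tangent_u k (pu \<psi> q) = c1 *\<^sub>R a t + c2 *\<^sub>R b t" "graph_tangent_v k (pv \<psi> q) = c3 *\<^sub>R a t + c4 *\<^sub>R b t"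
    by blast
  from lor_orthogonal_span[OF this graph_tangents_independent graph_normal_orthogonal]
  show ?thesis .
qed


lemma geodesic_on_surface:
  assumes diagonal: "\<And>t. t \<in> I \<Longrightarrow> c t = X (t, t)"
    and normal: "\<And>t. t \<in> I \<Longrightarrow> lor (prin_normal c t) (a t) = 0 \<and> lor (prin_normal c t) (b t) = 0"
  shows "geodesic_on surface I c"
  unfolding geodesic_on_def
proof (intro ballI conjI allI impI)
  fix t assume t: "t \<in> I"
  then show "c t \<in> surface"
    using diagonal_in_params[OF t] diagonal[OF t] by (simp add: surface_def)
  fix V k U \<psi> q assume "BI_chart surface V k U \<psi>" "c t \<in> V" "q \<in> U" "graph_pt k \<psi> q = c t"
  then show "\<exists>l. prin_normal c t = l *\<^sub>R graph_normal k \<psi> q"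
    using orthogonal_null_pair_parallel null[OF t] normal[OF t] graph_normal_nonzero
      surface_normal_orthogonal[OF t] diagonal[OF t] by (metis less_irrefl lor_commute)
qed

end

section \<open>The surface through a timelike curve\<close>

lemma smooth_curve_derivatives:
  assumes "open I" "smooth_curve I c"
  shows "\<And>t. t \<in> I \<Longrightarrow> (c has_vector_derivative vel c t) (at t)"
    and "vel c C1_differentiable_on I" and "acc c C1_differentiable_on I"
proof -
  obtain D where D0: "D 0 = c" and D: "\<And>n t. t \<in> I \<Longrightarrow> (D n has_vector_derivative D (Suc n) t) (at t)"
    using assms(2) unfolding smooth_curve_def by blast
  have D_C1: "D n C1_differentiable_on I" for n
  proof -
    have "continuous_on I (D (Suc n))"
      by (rule has_vector_derivative_imp_continuous_on) (rule D)
    then show ?thesis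
      unfolding C1_differentiable_on_def using D by (intro exI[of _ "D (Suc n)"]) simp
  qed
  have vel: "vel c t = D 1 t" if "t \<in> I" for t
    unfolding vel_def using vector_derivative_at[OF D[OF that, of 0]] D0 by simp
  have "(vel c has_vector_derivative D 2 t) (at t)" if "t \<in> I" for t
    using has_vector_derivative_transform_within_open[OF D[OF that, of 1] assms(1) that] vel
    by (simp add: numeral_2_eq_2)
  then have acc: "acc c t = D 2 t" if "t \<in> I" for t
    unfolding acc_def using vector_derivative_at that by blast
  show "(c has_vector_derivative vel c t) (at t)" if "t \<in> I" for t
    using D[OF that, of 0] D0 vel[OF that] by simp
  show "vel c C1_differentiable_on I"
    by (rule C1_differentiable_on_open_cong[OF assms(1) _ D_C1]) (simp add: vel)
  show "acc c C1_differentiable_on I"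
    by (rule C1_differentiable_on_open_cong[OF assms(1) _ D_C1]) (simp add: acc)
qed

lemma lor_normal_component:
  assumes "lor T T < 0" "0 < lor A A"
  defines "P \<equiv> A - (lor A T / lor T T) *\<^sub>R T"
  shows "lor P T = 0" and "0 < lor P P"
proof -
  show PT: "lor P T = 0"
    using assms(1) by (simp add: P_def lor_linear)
  have "lor P P = lor P A"
    using PT by (simp add: P_def lor_linear)
  also have "\<dots> = lor A A - (lor A T)\<^sup>2 / lor T T"
    by (simp add: P_def lor_linear lor_commute power2_eq_square)
  finally show "0 < lor P P"
    using assms(1,2) divide_nonneg_neg[of "(lor A T)\<^sup>2" "lor T T"] by simp
qed

text \<open>The scaling makes \<open>T + w\<close> and \<open>T - w\<close> null.\<close>
lemma lor_binormal:
  assumes "lor T T < 0" "0 < lor P P" "lor P T = 0"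
  defines "w \<equiv> (1 / sqrt (lor P P)) *\<^sub>R lor_cross P T"
  shows "lor w w = - lor T T" and "lor w T = 0" and "lor w P = 0"
proof -
  have "lor w w = (1 / sqrt (lor P P))\<^sup>2 * ((lor P T)\<^sup>2 - lor P P * lor T T)"
    by (simp add: w_def lor_linear lor_cross_self power2_eq_square)
  then show "lor w w = - lor T T"
    using assms(2,3) by (simp add: power_divide)
  show "lor w T = 0" "lor w P = 0"
    by (simp_all add: w_def lor_linear lor_cross_orthogonal_left lor_cross_orthogonal_right)
qed

lemma timelike_curve_null_splitting:
  assumes I: "open I" and c: "smooth_curve I c"
    and timelike: "\<forall>t\<in>I. lor (vel c t) (vel c t) < 0"
    and spacelike: "\<forall>t\<in>I. 0 < lor (acc c t) (acc c t)"
  obtains a b where "a C1_differentiable_on I" "b C1_differentiable_on I"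
    and "\<And>t. t \<in> I \<Longrightarrow> vel c t = a t + b t"
    and "\<And>t. t \<in> I \<Longrightarrow> lor (a t) (a t) = 0 \<and> lor (b t) (b t) = 0 \<and> lor (a t) (b t) < 0"
    and "\<And>t. t \<in> I \<Longrightarrow> lor (prin_normal c t) (a t) = 0 \<and> lor (prin_normal c t) (b t) = 0"
proof -
  define P where "P = prin_normal c"
  define w where "w t = (1 / sqrt (lor (P t) (P t))) *\<^sub>R lor_cross (P t) (vel c t)" for t
  have P: "lor (P t) (vel c t) = 0" "0 < lor (P t) (P t)" if "t \<in> I" for t
    using lor_normal_component[OF timelike[rule_format, OF that] spacelike[rule_format, OF that]]
    by (simp_all add: P_def prin_normal_def)
  have w: "lor (w t) (w t) = - lor (vel c t) (vel c t)" "lor (w t) (vel c t) = 0" "lor (w t) (P t) = 0"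
    if "t \<in> I" for t
    using lor_binormal[OF timelike[rule_format, OF that] P(2)[OF that] P(1)[OF that]] by (simp_all add: w_def)
  have vel: "vel c C1_differentiable_on I" and acc: "acc c C1_differentiable_on I"
    using smooth_curve_derivatives[OF I c] by auto
  have "P C1_differentiable_on I"
    unfolding P_def prin_normal_def[abs_def] using vel acc timelike
    by (intro derivative_intros C1_differentiable_on_divide C1_differentiable_on_lor) auto
  then have w_C1: "w C1_differentiable_on I"
    unfolding w_def using P(2) vel
    by (intro derivative_intros C1_differentiable_on_divide C1_differentiable_on_sqrt
        C1_differentiable_on_lor C1_differentiable_on_lor_cross) (auto simp: less_imp_neq[symmetric])
  show ?thesis
  proof (rule that[of "\<lambda>t. (1/2) *\<^sub>R (vel c t + w t)" "\<lambda>t. (1/2) *\<^sub>R (vel c t - w t)"])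
    show "(\<lambda>t. (1/2) *\<^sub>R (vel c t + w t)) C1_differentiable_on I"
      and "(\<lambda>t. (1/2) *\<^sub>R (vel c t - w t)) C1_differentiable_on I"
      using w_C1 vel by (auto intro!: derivative_intros)
    fix t assume t: "t \<in> I"
    show "vel c t = (1/2) *\<^sub>R (vel c t + w t) + (1/2) *\<^sub>R (vel c t - w t)"
      by (simp add: scaleR_add_right[symmetric])
    show "lor ((1/2) *\<^sub>R (vel c t + w t)) ((1/2) *\<^sub>R (vel c t + w t)) = 0 \<and>
        lor ((1/2) *\<^sub>R (vel c t - w t)) ((1/2) *\<^sub>R (vel c t - w t)) = 0 \<and>
        lor ((1/2) *\<^sub>R (vel c t + w t)) ((1/2) *\<^sub>R (vel c t - w t)) < 0"
      using w[OF t] timelike t lor_commute[of "vel c t" "w t"] by (simp add: lor_linear)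
    show "lor (prin_normal c t) ((1/2) *\<^sub>R (vel c t + w t)) = 0 \<and>
        lor (prin_normal c t) ((1/2) *\<^sub>R (vel c t - w t)) = 0"
      using w[OF t] P[OF t] lor_commute[of "P t" "w t"] by (simp add: P_def lor_linear)
  qed
qed

lemma null_pair_time_orientation:
  fixes I :: "real set"
  assumes I: "is_interval I" and a: "continuous_on I a"
    and null: "\<And>t. t \<in> I \<Longrightarrow> lor (a t) (a t) = 0 \<and> lor (b t) (b t) = 0 \<and> lor (a t) (b t) < 0"
  obtains \<sigma> :: real where "\<And>t. t \<in> I \<Longrightarrow> 0 < \<sigma> * snd (snd (a t)) \<and> 0 < \<sigma> * snd (snd (b t))"
proof -
  have "snd (snd (a t)) \<noteq> 0" if "t \<in> I" for t
    using null[OF that] null_vector_time_nonzero[of "a t"] by (auto simp: lor_def zero_prod_def)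
  moreover have "continuous_on I (\<lambda>t. snd (snd (a t)))"
    using a by (intro continuous_intros)
  ultimately have "(\<forall>t\<in>I. 0 < snd (snd (a t))) \<or> (\<forall>t\<in>I. snd (snd (a t)) < 0)"
    using continuous_on_interval_sign[OF I] by blast
  then obtain \<sigma> :: real where \<sigma>: "\<sigma> = 1 \<or> \<sigma> = -1" "\<And>t. t \<in> I \<Longrightarrow> 0 < \<sigma> * snd (snd (a t))"
    by (metis mult_1 mult_minus1 neg_0_less_iff_less)
  have ab: "0 < snd (snd (a t)) * snd (snd (b t))" if "t \<in> I" for t
    using null_vectors_same_time_orientation null[OF that] by blast
  show thesis
  proof (rule that)
    fix t assume t: "t \<in> I"
    show "0 < \<sigma> * snd (snd (a t)) \<and> 0 < \<sigma> * snd (snd (b t))"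
      using \<sigma>(1) \<sigma>(2)[OF t] ab[OF t] by (auto simp: zero_less_mult_iff)
  qed
qed

lemma timelike_curve_null_parametrization:
  assumes I: "open I" "is_interval I" and c: "smooth_curve I c"
    and timelike: "\<forall>t\<in>I. lor (vel c t) (vel c t) < 0"
    and spacelike: "\<forall>t\<in>I. 0 < lor (acc c t) (acc c t)"
  obtains \<sigma> \<alpha> \<beta> a b where "null_parametrization I \<sigma> \<alpha> \<beta> a b"
    and "\<And>t. t \<in> I \<Longrightarrow> c t = \<alpha> t + \<beta> t"
    and "\<And>t. t \<in> I \<Longrightarrow> lor (prin_normal c t) (a t) = 0 \<and> lor (prin_normal c t) (b t) = 0"
proof -
  obtain a b where a: "a C1_differentiable_on I" and b: "b C1_differentiable_on I"
    and vel: "\<And>t. t \<in> I \<Longrightarrow> vel c t = a t + b t"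
    and null: "\<And>t. t \<in> I \<Longrightarrow> lor (a t) (a t) = 0 \<and> lor (b t) (b t) = 0 \<and> lor (a t) (b t) < 0"
    and normal: "\<And>t. t \<in> I \<Longrightarrow> lor (prin_normal c t) (a t) = 0 \<and> lor (prin_normal c t) (b t) = 0"
    using timelike_curve_null_splitting[OF I(1) c timelike spacelike] by blast
  have a_cont: "continuous_on I a"
    using a by (rule C1_diff_imp_diff[THEN differentiable_imp_continuous_on])
  obtain \<alpha> where \<alpha>: "\<And>t. t \<in> I \<Longrightarrow> (\<alpha> has_vector_derivative a t) (at t)"
    using antiderivative_on_open_interval[OF I a_cont] by blast
  have \<beta>: "((\<lambda>t. c t - \<alpha> t) has_vector_derivative b t) (at t)" if "t \<in> I" for t
    using has_vector_derivative_diff[OF smooth_curve_derivatives(1)[OF I(1) c that] \<alpha>[OF that]] vel[OF that]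
    by simp
  obtain \<sigma> where "\<And>t. t \<in> I \<Longrightarrow> 0 < \<sigma> * snd (snd (a t)) \<and> 0 < \<sigma> * snd (snd (b t))"
    using null_pair_time_orientation[OF I(2) a_cont null] by blast
  then have "null_parametrization I \<sigma> \<alpha> (\<lambda>t. c t - \<alpha> t) a b"
    using I \<alpha> \<beta> a b null by unfold_locales auto
  then show thesis
    using that normal by simp
qed

theorem corollary2p2:
  fixes I :: "real set" and c :: "real \<Rightarrow> real \<times> real \<times> real"
  assumes "open I" and "is_interval I" and "I \<noteq> {}"
    and "smooth_curve I c"
    and "\<forall>t\<in>I. lor (vel c t) (vel c t) < 0"
    and "\<forall>t\<in>I. lor (acc c t) (acc c t) > 0"
  shows "\<exists>S. BI_general_surface S \<and> geodesic_on S I c"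
proof -
  obtain \<sigma> \<alpha> \<beta> a b where surf: "null_parametrization I \<sigma> \<alpha> \<beta> a b"
    and c: "\<And>t. t \<in> I \<Longrightarrow> c t = \<alpha> t + \<beta> t"
    and normal: "\<And>t. t \<in> I \<Longrightarrow> lor (prin_normal c t) (a t) = 0 \<and> lor (prin_normal c t) (b t) = 0"
    using timelike_curve_null_parametrization[OF assms(1,2,4,5,6)] by blast
  interpret null_parametrization I \<sigma> \<alpha> \<beta> a b
    by (fact surf)
  have "geodesic_on surface I c"
    using c normal by (intro geodesic_on_surface) (simp_all add: X_def)
  then show ?thesis
    using BI_general_surface_surface by blast
qed

end
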